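(* Let $N=N(n)\le n$ with $n\to\infty$ and $N/n\to c\in(0,1]$. Let $D>0$, let $\varphi_1,\dots,\varphi_r\in[0,\pi/D]$ be pairwise distinct, $b_n(\varphi)=N^{-1/2}[\exp(-\imath D\ell\varphi)]_{\ell=0}^{N-1}$, $B=[b_n(\varphi_1),\dots,b_n(\varphi_r)]$, $B'=[b_n'(\varphi_1),\dots,b_n'(\varphi_r)]$, $B''=[b_n''(\varphi_1),\dots,b_n''(\varphi_r)]$ (derivatives in $\varphi$), and let $B^\perp$ be the $N\times r$ matrix defined by $\frac1nB'=-\frac{\imath cD}{2}B+\frac{cD}{2\sqrt3}B^\perp$. Let $P_n=BS_n^*$ where $S_n$ is a deterministic $n\times r$ matrix with $\sqrt n(S_n^*S_n-O^2)=\mathcal O(1)$, $O=\operatorname{diag}(\omega_1I_{j_1},\dots,\omega_sI_{j_s})$, $\omega_1>\dots>\omega_s>0$, $\sum j_i=r$, and assume $P_n$ has rank $r$ for $n$ large with SVD $P_n=U_n\Omega_nV_n^*$, $U_n=[u_{1,n},\dots,u_{r,n}]$, $\Omega_n=\operatorname{diag}(\omega_{1,n}\ge\dots\ge\omega_{r,n})\to O$. Write $B=[B_1,\dots,B_s]$ with $B_i$ having $j_i$ columns, let $\Pi_{B_i}$ be the orthogonal projector onto the column space of $B_i$, and $\Pi_i=\sum_{k:\,j_1+\dots+j_{i-1}<k\le j_1+\dots+j_i}u_{k,n}u_{k,n}^*$. Then as $n\to\infty$: $B^*B\to I_r$; $\ n^{-2}B^*B''\to-\frac{c^2D^2}{3}I_r$;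 $\ (B^\perp)^*B^\perp\to I_r$; $\ (B^\perp)^*B\to0$; and $\|\Pi_i-\Pi_{B_i}\|\to0$ for all $i=1,\dots,s$.
   Context: $\|\cdot\|$ is the spectral norm. *)

theory Defs
  imports "HOL-Analysis.Derivative" "Jordan_Normal_Form.Schur_Decomposition"
begin

text \<open>All indices are 0-based. Matrices are Jordan_Normal_Form matrices over complex.\<close>

definition bent :: "nat \<Rightarrow> real \<Rightarrow> nat \<Rightarrow> real \<Rightarrow> complex" where
  "bent N D l t = exp (- \<i> * complex_of_real (D * real l * t)) / complex_of_real (sqrt (real N))"

definition Bmat :: "nat \<Rightarrow> real \<Rightarrow> nat \<Rightarrow> (nat \<Rightarrow> real) \<Rightarrow> complex mat" where
  "Bmat N D r phi = mat N r (\<lambda>(l,k). bent N D l (phi k))"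

definition Bmat' :: "nat \<Rightarrow> real \<Rightarrow> nat \<Rightarrow> (nat \<Rightarrow> real) \<Rightarrow> complex mat" where
  "Bmat' N D r phi = mat N r (\<lambda>(l,k). vector_derivative (bent N D l) (at (phi k)))"

definition Bmat'' :: "nat \<Rightarrow> real \<Rightarrow> nat \<Rightarrow> (nat \<Rightarrow> real) \<Rightarrow> complex mat" where
  "Bmat'' N D r phi = mat N r (\<lambda>(l,k).
      vector_derivative (\<lambda>t. vector_derivative (bent N D l) (at t)) (at (phi k)))"

text \<open>B^perp, defined by (1/n) B' = -(i c D/2) B + (c D/(2 sqrt 3)) B^perp.\<close>
definition Bperp :: "nat \<Rightarrow> nat \<Rightarrow> real \<Rightarrow> real \<Rightarrow> nat \<Rightarrow> (nat \<Rightarrow> real) \<Rightarrow> complex mat" where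
  "Bperp n N c D r phi =
     complex_of_real (2 * sqrt 3 / (c * D)) \<cdot>\<^sub>m
       (complex_of_real (1 / real n) \<cdot>\<^sub>m Bmat' N D r phi
        + (\<i> * complex_of_real (c * D / 2)) \<cdot>\<^sub>m Bmat N D r phi)"

definition blk_start :: "(nat \<Rightarrow> nat) \<Rightarrow> nat \<Rightarrow> nat" where
  "blk_start j i = (\<Sum>l<i. j l)"

text \<open>Diagonal entry k of O = diag(omega_0 I_(j_0), ..., omega_(s-1) I_(j_(s-1))).\<close>
definition Odiag :: "nat \<Rightarrow> (nat \<Rightarrow> nat) \<Rightarrow> (nat \<Rightarrow> real) \<Rightarrow> nat \<Rightarrow> real" where
  "Odiag s j \<omega> k = \<omega> (THE i. i < s \<and> blk_start j i \<le> k \<and> k < blk_start j (Suc i))"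

definition Omat :: "nat \<Rightarrow> nat \<Rightarrow> (nat \<Rightarrow> nat) \<Rightarrow> (nat \<Rightarrow> real) \<Rightarrow> complex mat" where
  "Omat r s j \<omega> = mat_diag r (\<lambda>k. complex_of_real (Odiag s j \<omega> k))"

definition col_block :: "complex mat \<Rightarrow> (nat \<Rightarrow> nat) \<Rightarrow> nat \<Rightarrow> complex mat" where
  "col_block M j i = mat (dim_row M) (j i) (\<lambda>(l,k). M $$ (l, blk_start j i + k))"

definition cinner :: "complex vec \<Rightarrow> complex vec \<Rightarrow> complex" where
  "cinner x y = (\<Sum>i<dim_vec x. x $ i * cnj (y $ i))"

definition vnorm :: "complex vec \<Rightarrow> real" where
  "vnorm x = sqrt (\<Sum>i<dim_vec x. (cmod (x $ i))\<^sup>2)"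

definition spec_norm :: "complex mat \<Rightarrow> real" where
  "spec_norm A = Sup {vnorm (A *\<^sub>v x) | x. x \<in> carrier_vec (dim_col A) \<and> vnorm x = 1}"

definition colspace :: "complex mat \<Rightarrow> complex vec set" where
  "colspace M = {M *\<^sub>v y | y. y \<in> carrier_vec (dim_col M)}"

definition is_orth_proj :: "complex mat \<Rightarrow> complex vec set \<Rightarrow> nat \<Rightarrow> bool" where
  "is_orth_proj P W m \<longleftrightarrow> P \<in> carrier_mat m m \<and>
     (\<forall>x \<in> carrier_vec m. P *\<^sub>v x \<in> W \<and> (\<forall>w \<in> W. cinner (x - P *\<^sub>v x) w = 0))"

definition proj_colspace :: "complex mat \<Rightarrow> complex mat" where
  "proj_colspace M = (THE P. is_orth_proj P (colspace M) (dim_row M))"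

definition Pi_blk :: "complex mat \<Rightarrow> (nat \<Rightarrow> nat) \<Rightarrow> nat \<Rightarrow> complex mat" where
  "Pi_blk U j i = mat (dim_row U) (dim_row U)
     (\<lambda>(a,b). \<Sum>k\<in>{blk_start j i..<blk_start j (Suc i)}. U $$ (a,k) * cnj (U $$ (b,k)))"

end

theory Submission
  imports Defs "HOL-Analysis.Complex_Transcendental"
begin

text \<open>
  Each entry of B*B, n^-2 B*B'', (B^perp)*B^perp and (B^perp)*B is an average
  N^-1 sum_l w(l/n) z^l with a quadratic weight w and z = exp(i D (phi_a - phi_b)). On the
  diagonal z = 1 and these are Riemann sums with limits 1, c/2, c^2/3. Off the diagonal z is a
  point of the unit circle other than 1 (because |D (phi_a - phi_b)| <= pi), and summation by parts
  bounds the sums by O(1/N).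

  For the singular subspaces write U = B W with W = S* V Sigma^-1. Then W* (B*B) W = I and
  (S*S) (B*B) W = W Sigma^2. As B*B -> I and S*S -> O^2, the second identity forces the entries
  of W that couple different singular values of O to vanish, and the first one gives W W* -> I.
  Hence Pi_i - B_i B_i* = B X B* with X -> 0 entrywise, which is small in operator norm because
  every entry of B has modulus N^-1/2; finally B_i B_i* is close to the projector onto the
  columns of B_i because B_i* B_i -> I.
\<close>

lemma adjoint_dims [simp]: "dim_row (mat_adjoint A) = dim_col A" "dim_col (mat_adjoint A) = dim_row A"
  unfolding mat_adjoint_def by simp_all

lemma adjoint_index [simp]: "i < dim_col A \<Longrightarrow> j < dim_row A \<Longrightarrow> mat_adjoint A $$ (i,j) = cnj (A $$ (j,i))"
  unfolding mat_adjoint_def by (simp add: mat_of_rows_def)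

lemma carrier_mat_adjoint [simp]: "A \<in> carrier_mat m n \<Longrightarrow> mat_adjoint A \<in> carrier_mat n m"
  by (intro carrier_matI) auto

lemma adjoint_adjoint [simp]: "mat_adjoint (mat_adjoint A) = (A :: complex mat)"
  by (intro eq_matI) auto

lemma times_mat_index:
  "a < dim_row X \<Longrightarrow> b < dim_col Y \<Longrightarrow> dim_col X = dim_row Y \<Longrightarrow>
   (X * Y) $$ (a,b) = (\<Sum>l<dim_col X. X $$ (a,l) * Y $$ (l,b))"
  by (simp add: scalar_prod_def atLeast0LessThan)

lemma adjoint_times_mat_index:
  "a < dim_col X \<Longrightarrow> b < dim_col Y \<Longrightarrow> dim_row X = dim_row Y \<Longrightarrow>
   (mat_adjoint X * Y) $$ (a,b) = (\<Sum>l<dim_row X. cnj (X $$ (l,a)) * Y $$ (l,b))"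
  by (subst times_mat_index) auto

lemma adjoint_mult:
  fixes A B :: "complex mat"
  assumes "A \<in> carrier_mat m n" "B \<in> carrier_mat n p"
  shows "mat_adjoint (A * B) = mat_adjoint B * mat_adjoint A"
proof (rule eq_matI)
  fix i j assume "i < dim_row (mat_adjoint B * mat_adjoint A)" "j < dim_col (mat_adjoint B * mat_adjoint A)"
  then have i: "i < p" and j: "j < m" using assms by auto
  have "mat_adjoint (A * B) $$ (i,j) = cnj ((A * B) $$ (j,i))" using assms i j by simp
  also have "\<dots> = cnj (\<Sum>l<n. A $$ (j,l) * B $$ (l,i))" using assms i j by (subst times_mat_index) auto
  also have "\<dots> = (\<Sum>l<n. mat_adjoint B $$ (i,l) * mat_adjoint A $$ (l,j))"
    unfolding cnj_sum using assms i j by (intro sum.cong refl) (simp add: mult.commute)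
  also have "\<dots> = (mat_adjoint B * mat_adjoint A) $$ (i,j)"
    using assms i j by (subst times_mat_index) auto
  finally show "mat_adjoint (A * B) $$ (i,j) = (mat_adjoint B * mat_adjoint A) $$ (i,j)" .
qed (use assms in auto)

lemma adjoint_mat_diag_of_real:
  "mat_adjoint (mat_diag r (\<lambda>k. complex_of_real (f k))) = mat_diag r (\<lambda>k. complex_of_real (f k))"
  by (intro eq_matI) (auto simp: mat_diag_def)

lemma mult_mat_vec_index_sum:
  "i < dim_row A \<Longrightarrow> dim_vec v = dim_col A \<Longrightarrow> (A *\<^sub>v v) $ i = (\<Sum>p<dim_col A. A $$ (i,p) * v $ p)"
  by (simp add: scalar_prod_def atLeast0LessThan)

lemma row_scalar_prod_sum:
  "dim_vec v = dim_col A \<Longrightarrow> row A i \<bullet> v = (\<Sum>p<dim_col A. A $$ (i,p) * v $ p)"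
  by (auto simp: scalar_prod_def row_def atLeast0LessThan intro!: sum.cong)

lemma sandwich_index:
  fixes B X :: "complex mat"
  assumes B: "B \<in> carrier_mat N r" and X: "X \<in> carrier_mat r r" and ab: "a < N" "b < N"
  shows "(B * X * mat_adjoint B) $$ (a,b) = (\<Sum>p<r. \<Sum>q<r. B $$ (a,p) * X $$ (p,q) * cnj (B $$ (b,q)))"
proof -
  have BX: "B * X \<in> carrier_mat N r" using B X by simp
  have "(B * X * mat_adjoint B) $$ (a,b) = (\<Sum>q<r. (B * X) $$ (a,q) * mat_adjoint B $$ (q,b))"
    using BX B ab by (subst times_mat_index) auto
  also have "\<dots> = (\<Sum>q<r. (\<Sum>p<r. B $$ (a,p) * X $$ (p,q)) * cnj (B $$ (b,q)))"
    using B X ab by (intro sum.cong refl) (subst times_mat_index, auto)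
  also have "\<dots> = (\<Sum>q<r. \<Sum>p<r. B $$ (a,p) * X $$ (p,q) * cnj (B $$ (b,q)))"
    by (simp add: sum_distrib_right)
  also have "\<dots> = (\<Sum>p<r. \<Sum>q<r. B $$ (a,p) * X $$ (p,q) * cnj (B $$ (b,q)))" by (rule sum.swap)
  finally show ?thesis .
qed

lemma sum_times_delta_right:
  fixes r :: nat
  assumes "b < r"
  shows "(\<Sum>m<r. f m * (if m = b then 1 else 0)) = (f b :: 'a :: semiring_1)"
proof -
  have "(\<Sum>m<r. f m * (if m = b then 1 else 0)) = (\<Sum>m<r. if m = b then f m else 0)"
    by (intro sum.cong) auto
  with assms show ?thesis by simp
qed

lemma sum_delta_times_left:
  fixes r :: nat
  assumes "a < r"
  shows "(\<Sum>m<r. (if a = m then c else 0) * f m) = (c * f a :: 'a :: semiring_1)"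
proof -
  have "(\<Sum>m<r. (if a = m then c else 0) * f m) = (\<Sum>m<r. if m = a then c * f m else 0)"
    by (intro sum.cong) auto
  with assms show ?thesis by simp
qed

lemma times_mat_index_tendsto:
  fixes A B :: "'b \<Rightarrow> complex mat"
  assumes carrier: "\<forall>\<^sub>F n in F. A n \<in> carrier_mat r r \<and> B n \<in> carrier_mat r r"
    and A: "\<And>a b. a < r \<Longrightarrow> b < r \<Longrightarrow> ((\<lambda>n. A n $$ (a,b)) \<longlongrightarrow> A' a b) F"
    and B: "\<And>a b. a < r \<Longrightarrow> b < r \<Longrightarrow> ((\<lambda>n. B n $$ (a,b)) \<longlongrightarrow> B' a b) F"
    and ab: "a < r" "b < r"
  shows "((\<lambda>n. (A n * B n) $$ (a,b)) \<longlongrightarrow> (\<Sum>p<r. A' a p * B' p b)) F"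
proof -
  have "((\<lambda>n. \<Sum>p<r. A n $$ (a,p) * B n $$ (p,b)) \<longlongrightarrow> (\<Sum>p<r. A' a p * B' p b)) F"
    using ab by (intro tendsto_sum tendsto_mult A B) auto
  moreover have "\<forall>\<^sub>F n in F. (\<Sum>p<r. A n $$ (a,p) * B n $$ (p,b)) = (A n * B n) $$ (a,b)"
    using carrier by eventually_elim (use ab in \<open>subst times_mat_index, auto\<close>)
  ultimately show ?thesis by (rule Lim_transform_eventually)
qed

lemma eventually_bounded_mult_tendsto_0:
  assumes "\<forall>\<^sub>F n in F. cmod (f n) \<le> K" "(g \<longlongrightarrow> 0) F"
  shows "((\<lambda>n. f n * g n :: complex) \<longlongrightarrow> 0) F"
proof (rule Lim_null_comparison)
  show "((\<lambda>n. K * cmod (g n)) \<longlongrightarrow> 0) F"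
    using tendsto_mult_right_zero[OF tendsto_norm_zero[OF assms(2)]] .
  show "\<forall>\<^sub>F n in F. norm (f n * g n) \<le> K * cmod (g n)"
    using assms(1) by eventually_elim (simp add: norm_mult mult_right_mono)
qed

section \<open>Cesaro moments of points on the unit circle\<close>

lemma weighted_geometric_sum_by_parts:
  fixes z :: "'a :: comm_ring_1"
  shows "(1 - z) * (\<Sum>l<N. w l * z ^ l) =
    w 0 + (\<Sum>l<N. (w (Suc l) - w l) * z ^ Suc l) - w N * z ^ N"
proof (induction N)
  case (Suc N)
  have "(1 - z) * (\<Sum>l<Suc N. w l * z ^ l) = (1 - z) * (\<Sum>l<N. w l * z ^ l) + (1 - z) * (w N * z ^ N)"
    by (simp add: distrib_left)
  also have "\<dots> = w 0 + (\<Sum>l<Suc N. (w (Suc l) - w l) * z ^ Suc l) - w (Suc N) * z ^ Suc N"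
    unfolding Suc.IH by (simp add: algebra_simps)
  finally show ?case .
qed simp

lemma norm_weighted_geometric_sum_le:
  fixes z :: complex and f :: "nat \<Rightarrow> real"
  assumes f: "mono f" "0 \<le> f 0" and z: "cmod z = 1" "z \<noteq> 1"
  shows "cmod (\<Sum>l<N. of_real (f l) * z ^ l) \<le> 2 * f N / cmod (1 - z)"
proof -
  have "cmod (1 - z) * cmod (\<Sum>l<N. of_real (f l) * z ^ l)
      = cmod (of_real (f 0) + (\<Sum>l<N. (of_real (f (Suc l)) - of_real (f l)) * z ^ Suc l) - of_real (f N) * z ^ N)"
    by (simp add: weighted_geometric_sum_by_parts flip: norm_mult)
  also have "\<dots> \<le> f 0 + (\<Sum>l<N. f (Suc l) - f l) + f N"
  proof -
    have "cmod (\<Sum>l<N. (of_real (f (Suc l)) - of_real (f l)) * z ^ Suc l) \<le> (\<Sum>l<N. f (Suc l) - f l)"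
      using f z by (intro order_trans[OF norm_sum] sum_mono)
        (simp add: norm_mult norm_power monoD flip: of_real_diff)
    moreover have "0 \<le> f N" using f by (meson monoD order_trans zero_le)
    ultimately show ?thesis
      using f z by (intro order_trans[OF norm_triangle_ineq4] add_mono order_trans[OF norm_triangle_ineq])
        (simp_all add: norm_mult norm_power)
  qed
  also have "\<dots> = 2 * f N" by (simp add: sum_lessThan_telescope)
  finally show ?thesis using z by (simp add: field_simps mult.commute)
qed

definition cesaro_moment :: "complex \<Rightarrow> nat \<Rightarrow> nat \<Rightarrow> nat \<Rightarrow> complex" where
  "cesaro_moment z k n N = (\<Sum>l<N. of_real ((real l / real n) ^ k) * z ^ l) / of_nat N"

lemma cesaro_moment_tendsto_0:
  assumes N_le: "\<And>n. N n \<le> n" and N_top: "filterlim (\<lambda>n. real (N n)) at_top sequentially"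
    and z: "cmod z = 1" "z \<noteq> 1"
  shows "(\<lambda>n. cesaro_moment z k n (N n)) \<longlonglongrightarrow> 0"
proof (rule Lim_null_comparison)
  show "(\<lambda>n. 2 / cmod (1 - z) * inverse (real (N n))) \<longlonglongrightarrow> 0"
    using tendsto_mult_right_zero[OF tendsto_inverse_0_at_top[OF N_top]] .
  show "\<forall>\<^sub>F n in sequentially. norm (cesaro_moment z k n (N n)) \<le> 2 / cmod (1 - z) * inverse (real (N n))"
  proof (rule always_eventually, rule allI)
    fix n
    have mono: "mono (\<lambda>l. (real l / real n) ^ k)"
      by (intro monoI power_mono divide_right_mono) simp_all
    have "(real (N n) / real n) ^ k \<le> 1"
      using N_le[of n] by (cases "n = 0") (simp_all add: power_le_one)
    then have "cmod (\<Sum>l<N n. of_real ((real l / real n) ^ k) * z ^ l) \<le> 2 / cmod (1 - z)"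
      using norm_weighted_geometric_sum_le[OF mono _ z, of "N n"] z
      by (simp add: divide_right_mono order_trans)
    then have "cmod (\<Sum>l<N n. of_real ((real l / real n) ^ k) * z ^ l) / real (N n)
        \<le> 2 / cmod (1 - z) / real (N n)"
      by (rule divide_right_mono) simp
    moreover have "norm (cesaro_moment z k n (N n)) = cmod (\<Sum>l<N n. of_real ((real l / real n) ^ k) * z ^ l) / real (N n)"
      by (simp only: cesaro_moment_def norm_divide norm_of_nat)
    ultimately show "norm (cesaro_moment z k n (N n)) \<le> 2 / cmod (1 - z) * inverse (real (N n))"
      by (simp add: divide_inverse)
  qed
qed

lemma sum_of_nat_lessThan: "(\<Sum>l<N. real l) = real N * (real N - 1) / 2"
  by (induction N) (auto simp: field_simps)

lemma sum_of_nat_squared_lessThan: "(\<Sum>l<N. (real l)^2) = real N * (real N - 1) * (2 * real N - 1) / 6"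
  by (induction N) (auto simp: field_simps power2_eq_square)

lemma cesaro_moment_at_1: "cesaro_moment 1 k n N = of_real ((\<Sum>l<N. (real l / real n) ^ k) / real N)"
  by (simp add: cesaro_moment_def)

lemma eventually_positive_of_at_top:
  assumes "filterlim (\<lambda>n. real (N n)) at_top sequentially"
  shows "\<forall>\<^sub>F n in sequentially. 0 < N n \<and> 0 < n"
proof -
  have "\<forall>\<^sub>F n in sequentially. 0 < real (N n)"
    using assms unfolding filterlim_at_top_dense by blast
  then show ?thesis using eventually_gt_at_top[of 0] by eventually_elim simp
qed

lemma cesaro_moment_0_at_1_tendsto:
  assumes "filterlim (\<lambda>n. real (N n)) at_top sequentially"
  shows "(\<lambda>n. cesaro_moment 1 0 n (N n)) \<longlonglongrightarrow> 1"
  by (rule Lim_transform_eventually[OF tendsto_const])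
    (use eventually_positive_of_at_top[OF assms] in \<open>eventually_elim, simp add: cesaro_moment_at_1\<close>)

lemma cesaro_moment_1_at_1_tendsto:
  assumes N_lim: "(\<lambda>n. real (N n) / real n) \<longlonglongrightarrow> c"
    and N_top: "filterlim (\<lambda>n. real (N n)) at_top sequentially"
  shows "(\<lambda>n. cesaro_moment 1 1 n (N n)) \<longlonglongrightarrow> of_real (c / 2)"
proof -
  have "(\<lambda>n. (real (N n) / real n - 1 / real n) / 2) \<longlonglongrightarrow> (c - 0) / 2"
    by (intro tendsto_intros N_lim lim_inverse_n') simp
  then have "(\<lambda>n. of_real ((real (N n) / real n - 1 / real n) / 2)) \<longlonglongrightarrow> (of_real (c / 2) :: complex)"
    by (intro tendsto_of_real) simp
  moreover have "\<forall>\<^sub>F n in sequentially. of_real ((real (N n) / real n - 1 / real n) / 2) = cesaro_moment 1 1 n (N n)"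
    using eventually_positive_of_at_top[OF N_top]
  proof eventually_elim
    case (elim n)
    have "(\<Sum>l<N n. (real l / real n) ^ 1) / real (N n) = (real (N n) / real n - 1 / real n) / 2"
      using elim by (simp add: sum_of_nat_lessThan field_simps flip: sum_divide_distrib)
    then show ?case by (simp only: cesaro_moment_at_1)
  qed
  ultimately show ?thesis by (rule Lim_transform_eventually)
qed

lemma cesaro_moment_2_at_1_tendsto:
  assumes N_lim: "(\<lambda>n. real (N n) / real n) \<longlonglongrightarrow> c"
    and N_top: "filterlim (\<lambda>n. real (N n)) at_top sequentially"
  shows "(\<lambda>n. cesaro_moment 1 2 n (N n)) \<longlonglongrightarrow> of_real (c^2 / 3)"
proof -
  let ?f = "\<lambda>n. (real (N n) / real n - 1 / real n) * (2 * (real (N n) / real n) - 1 / real n) / 6"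
  have "?f \<longlonglongrightarrow> (c - 0) * (2 * c - 0) / 6"
    by (intro tendsto_intros N_lim lim_inverse_n') simp
  then have "(\<lambda>n. of_real (?f n)) \<longlonglongrightarrow> (of_real (c^2 / 3) :: complex)"
    by (intro tendsto_of_real) (simp add: power2_eq_square)
  moreover have "\<forall>\<^sub>F n in sequentially. of_real (?f n) = cesaro_moment 1 2 n (N n)"
    using eventually_positive_of_at_top[OF N_top]
  proof eventually_elim
    case (elim n)
    have "(\<Sum>l<N n. (real l / real n) ^ 2) = (\<Sum>l<N n. (real l)^2) / (real n)^2"
      by (simp add: power_divide sum_divide_distrib)
    also have "\<dots> = real (N n) * (real (N n) - 1) * (2 * real (N n) - 1) / 6 / (real n)^2"
      by (simp add: sum_of_nat_squared_lessThan)
    finally have "(\<Sum>l<N n. (real l / real n) ^ 2) / real (N n) = ?f n"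
      using elim by (simp add: field_simps power2_eq_square)
    then show ?case by (simp only: cesaro_moment_at_1)
  qed
  ultimately show ?thesis by (rule Lim_transform_eventually)
qed

section \<open>Steering matrices\<close>

lemma bent_has_vector_derivative:
  "(bent N D l has_vector_derivative (- \<i> * of_real (D * real l)) * bent N D l t) (at t)"
proof -
  have "((\<lambda>w. exp (- \<i> * of_real (D * real l) * w) * inverse (of_real (sqrt (real N)))) has_field_derivative
        (- \<i> * of_real (D * real l)) * (exp (- \<i> * of_real (D * real l) * of_real t) * inverse (of_real (sqrt (real N)))))
      (at (of_real t))"
    by (auto intro!: derivative_eq_intros)
  from has_vector_derivative_real_field[OF this] show ?thesis
    unfolding bent_def by (simp add: mult.assoc divide_inverse)
qed

lemma vector_derivative_bent:
  "vector_derivative (bent N D l) (at t) = (- \<i> * of_real (D * real l)) * bent N D l t"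
  by (rule vector_derivative_at[OF bent_has_vector_derivative])

lemma second_vector_derivative_bent:
  "vector_derivative (\<lambda>t. vector_derivative (bent N D l) (at t)) (at t) = - of_real ((D * real l)^2) * bent N D l t"
proof -
  have "((\<lambda>t. vector_derivative (bent N D l) (at t)) has_vector_derivative
      (- \<i> * of_real (D * real l)) * ((- \<i> * of_real (D * real l)) * bent N D l t)) (at t)"
    unfolding vector_derivative_bent by (intro has_vector_derivative_mult_right bent_has_vector_derivative)
  from vector_derivative_at[OF this] show ?thesis by (simp add: power2_eq_square algebra_simps)
qed

lemma norm_bent: "cmod (bent N D l t) = 1 / sqrt (real N)"
  by (simp add: bent_def norm_divide)

definition steering_ratio :: "real \<Rightarrow> (nat \<Rightarrow> real) \<Rightarrow> nat \<Rightarrow> nat \<Rightarrow> complex" where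
  "steering_ratio D phi a b = exp (\<i> * of_real (D * (phi a - phi b)))"

lemma cnj_bent_mult_bent:
  "cnj (bent N D l (phi a)) * bent N D l (phi b) = steering_ratio D phi a b ^ l / of_nat N"
proof -
  have "cnj (bent N D l (phi a)) * bent N D l (phi b)
      = exp (\<i> * of_real (D * real l * phi a)) * exp (- \<i> * of_real (D * real l * phi b)) / (of_real (sqrt (real N)))^2"
    unfolding bent_def by (simp add: power2_eq_square exp_cnj)
  also have "exp (\<i> * of_real (D * real l * phi a)) * exp (- \<i> * of_real (D * real l * phi b))
      = exp (of_nat l * (\<i> * of_real (D * (phi a - phi b))))"
    by (simp add: exp_add[symmetric] algebra_simps)
  also have "(of_real (sqrt (real N)) :: complex)^2 = of_nat N"
    by (simp flip: of_real_power)
  finally show ?thesis by (simp add: exp_of_nat_mult steering_ratio_def)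
qed

lemma steering_ratio_eq_1_iff:
  assumes D: "0 < D" and phi: "\<And>k. k < r \<Longrightarrow> 0 \<le> phi k \<and> phi k \<le> pi / D"
    and inj: "inj_on phi {..<r}" and ab: "a < r" "b < r"
  shows "steering_ratio D phi a b = 1 \<longleftrightarrow> a = b"
proof
  assume "steering_ratio D phi a b = 1"
  then obtain m :: int where m: "D * (phi a - phi b) = 2 * pi * m"
    unfolding steering_ratio_def exp_eq_1 by (auto elim!: Ints_cases)
  have "\<bar>phi a - phi b\<bar> \<le> pi / D" using phi[OF ab(1)] phi[OF ab(2)] by linarith
  then have "D * \<bar>phi a - phi b\<bar> \<le> D * (pi / D)" using D by (intro mult_left_mono) simp_all
  then have "\<bar>D * (phi a - phi b)\<bar> \<le> pi" using D by (simp add: abs_mult)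
  then have "2 * \<bar>real_of_int m\<bar> \<le> 1" using m pi_gt_zero by (simp add: abs_mult)
  then have "m = 0" by linarith
  then have "phi a = phi b" using m D by simp
  then show "a = b" using inj ab by (auto dest: inj_onD)
qed (simp add: steering_ratio_def)

lemma steering_dims [simp]:
  "dim_row (Bmat N D r phi) = N" "dim_col (Bmat N D r phi) = r"
  "dim_row (Bmat'' N D r phi) = N" "dim_col (Bmat'' N D r phi) = r"
  "dim_row (Bperp n N c D r phi) = N" "dim_col (Bperp n N c D r phi) = r"
  by (simp_all add: Bmat_def Bmat''_def Bmat'_def Bperp_def)

lemma Bmat_index [simp]: "l < N \<Longrightarrow> k < r \<Longrightarrow> Bmat N D r phi $$ (l,k) = bent N D l (phi k)"
  by (simp add: Bmat_def)

lemma Bmat''_index [simp]: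
  "l < N \<Longrightarrow> k < r \<Longrightarrow> Bmat'' N D r phi $$ (l,k) = - of_real ((D * real l)^2) * bent N D l (phi k)"
  by (simp add: Bmat''_def second_vector_derivative_bent)

lemma Bperp_index:
  assumes "c \<noteq> 0" "D \<noteq> 0" "l < N" "k < r"
  shows "Bperp n N c D r phi $$ (l,k) = \<i> * of_real (2 * sqrt 3 / c * (c / 2 - real l / real n)) * bent N D l (phi k)"
proof -
  have "Bperp n N c D r phi $$ (l,k) = \<i> * of_real (2 * sqrt 3 / (c * D) * (c * D / 2 - D * real l / real n)) * bent N D l (phi k)"
    using assms by (simp add: Bperp_def Bmat'_def Bmat_def vector_derivative_bent algebra_simps)
  also have "2 * sqrt 3 / (c * D) * (c * D / 2 - D * real l / real n) = 2 * sqrt 3 / c * (c / 2 - real l / real n)"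
    using assms by (simp add: field_simps)
  finally show ?thesis .
qed

lemma adjoint_times_weighted_steering_index:
  assumes X: "dim_row X = N" "dim_col X = r" and Y: "dim_row Y = N" "dim_col Y = r"
    and X_index: "\<And>l k. l < N \<Longrightarrow> k < r \<Longrightarrow> X $$ (l,k) = f l * bent N D l (phi k)"
    and Y_index: "\<And>l k. l < N \<Longrightarrow> k < r \<Longrightarrow> Y $$ (l,k) = g l * bent N D l (phi k)"
    and ab: "a < r" "b < r"
  shows "(mat_adjoint X * Y) $$ (a,b) = (\<Sum>l<N. cnj (f l) * g l * (steering_ratio D phi a b ^ l / of_nat N))"
  using X Y ab by (subst adjoint_times_mat_index)
    (auto simp: X_index Y_index simp flip: cnj_bent_mult_bent intro!: sum.cong)

lemma proportional_sequence_at_top: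
  assumes "(\<lambda>n. real (N n) / real n) \<longlonglongrightarrow> c" "0 < c"
  shows "filterlim (\<lambda>n. real (N n)) at_top sequentially"
proof -
  have "filterlim (\<lambda>n. real (N n) / real n * real n) at_top sequentially"
    by (rule filterlim_tendsto_pos_mult_at_top[OF assms filterlim_real_sequentially])
  moreover have "\<forall>\<^sub>F n in sequentially. real (N n) / real n * real n = real (N n)"
    using eventually_gt_at_top[of 0] by eventually_elim simp
  ultimately show ?thesis by (simp add: filterlim_cong)
qed

context
  fixes N :: "nat \<Rightarrow> nat" and c D :: real and r :: nat and phi :: "nat \<Rightarrow> real"
  assumes N_le: "\<And>n. N n \<le> n"
    and N_lim: "(\<lambda>n. real (N n) / real n) \<longlonglongrightarrow> c"
    and c_pos: "0 < c" and D_pos: "0 < D"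
    and phi_range: "\<And>k. k < r \<Longrightarrow> 0 \<le> phi k \<and> phi k \<le> pi / D"
    and phi_distinct: "inj_on phi {..<r}"
begin

lemma quadratic_weighted_steering_sum_tendsto:
  assumes ab: "a < r" "b < r" and L: "L = \<alpha> + \<beta> * of_real (c / 2) + \<gamma> * of_real (c^2 / 3)"
  shows "(\<lambda>n. \<Sum>l<N n. (\<alpha> + \<beta> * of_real (real l / real n) + \<gamma> * of_real ((real l / real n)^2))
            * (steering_ratio D phi a b ^ l / of_nat (N n)))
    \<longlonglongrightarrow> (if a = b then L else 0)"
proof -
  let ?z = "steering_ratio D phi a b"
  let ?m = "\<lambda>z k n. cesaro_moment z k n (N n)"
  have N_top: "filterlim (\<lambda>n. real (N n)) at_top sequentially"
    by (rule proportional_sequence_at_top[OF N_lim c_pos])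
  have sum_eq: "(\<Sum>l<N n. (\<alpha> + \<beta> * of_real (real l / real n) + \<gamma> * of_real ((real l / real n)^2)) * (?z ^ l / of_nat (N n)))
      = \<alpha> * ?m ?z 0 n + \<beta> * ?m ?z 1 n + \<gamma> * ?m ?z 2 n" for n
    by (simp add: cesaro_moment_def sum.distrib sum_distrib_left sum_divide_distrib algebra_simps)
  have "(\<lambda>n. \<alpha> * ?m ?z 0 n + \<beta> * ?m ?z 1 n + \<gamma> * ?m ?z 2 n) \<longlonglongrightarrow> (if a = b then L else 0)"
  proof (cases "a = b")
    case True
    have "(\<lambda>n. \<alpha> * ?m 1 0 n + \<beta> * ?m 1 1 n + \<gamma> * ?m 1 2 n)
        \<longlonglongrightarrow> \<alpha> * 1 + \<beta> * of_real (c / 2) + \<gamma> * of_real (c^2 / 3)"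
      by (intro tendsto_intros cesaro_moment_0_at_1_tendsto[OF N_top]
          cesaro_moment_1_at_1_tendsto[OF N_lim N_top] cesaro_moment_2_at_1_tendsto[OF N_lim N_top])
    with True show ?thesis by (simp add: L steering_ratio_def)
  next
    case False
    have "cmod ?z = 1" "?z \<noteq> 1"
      using False steering_ratio_eq_1_iff[OF D_pos phi_range phi_distinct ab] by (auto simp: steering_ratio_def)
    from cesaro_moment_tendsto_0[OF N_le N_top this] False show ?thesis
      by (auto intro!: tendsto_eq_intros)
  qed
  then show ?thesis by (simp only: sum_eq)
qed

lemma steering_gram_tendsto:
  assumes ab: "a < r" "b < r"
  shows "(\<lambda>n. (mat_adjoint (Bmat (N n) D r phi) * Bmat (N n) D r phi) $$ (a, b)) \<longlonglongrightarrow> (if a = b then 1 else 0)"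
proof -
  have entry: "(mat_adjoint (Bmat (N n) D r phi) * Bmat (N n) D r phi) $$ (a, b)
      = (\<Sum>l<N n. (1 + 0 * of_real (real l / real n) + 0 * of_real ((real l / real n)^2))
          * (steering_ratio D phi a b ^ l / of_nat (N n)))" for n
    using ab by (subst adjoint_times_weighted_steering_index[where f = "\<lambda>_. 1" and g = "\<lambda>_. 1"]) simp_all
  have "(\<lambda>n. \<Sum>l<N n. (1 + 0 * of_real (real l / real n) + 0 * of_real ((real l / real n)^2))
          * (steering_ratio D phi a b ^ l / of_nat (N n))) \<longlonglongrightarrow> (if a = b then 1 else 0)"
    by (rule quadratic_weighted_steering_sum_tendsto[OF ab]) simp
  then show ?thesis by (simp only: entry)
qed

lemma steering_second_derivative_gram_tendsto:
  assumes ab: "a < r" "b < r"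
  shows "(\<lambda>n. complex_of_real (1 / (real n)\<^sup>2) *
          (mat_adjoint (Bmat (N n) D r phi) * Bmat'' (N n) D r phi) $$ (a, b))
    \<longlonglongrightarrow> (if a = b then complex_of_real (- (c\<^sup>2 * D\<^sup>2 / 3)) else 0)"
proof -
  have weight: "of_real (1 / (real n)\<^sup>2) * cnj 1 * (- of_real ((D * real l)^2))
      = 0 + 0 * of_real (real l / real n) + - of_real (D^2) * (of_real ((real l / real n)^2) :: complex)" for n l
  proof -
    have "of_real (1 / (real n)\<^sup>2) * cnj 1 * (- of_real ((D * real l)^2))
        = (of_real (1 / (real n)\<^sup>2 * (- ((D * real l)^2))) :: complex)"
      by (simp only: of_real_mult of_real_minus complex_cnj_one mult_1_right)
    also have "1 / (real n)\<^sup>2 * (- ((D * real l)^2)) = - (D^2) * (real l / real n)^2"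
      by (simp add: power_mult_distrib power_divide)
    also have "(of_real (- (D^2) * (real l / real n)^2) :: complex)
        = 0 + 0 * of_real (real l / real n) + - of_real (D^2) * of_real ((real l / real n)^2)"
      by (simp only: of_real_mult of_real_minus) simp
    finally show ?thesis .
  qed
  have entry: "complex_of_real (1 / (real n)\<^sup>2) * (mat_adjoint (Bmat (N n) D r phi) * Bmat'' (N n) D r phi) $$ (a, b)
      = (\<Sum>l<N n. (0 + 0 * of_real (real l / real n) + - of_real (D^2) * of_real ((real l / real n)^2))
          * (steering_ratio D phi a b ^ l / of_nat (N n)))" for n
  proof -
    have "(mat_adjoint (Bmat (N n) D r phi) * Bmat'' (N n) D r phi) $$ (a, b)
        = (\<Sum>l<N n. cnj 1 * (- of_real ((D * real l)^2)) * (steering_ratio D phi a b ^ l / of_nat (N n)))"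
      using ab by (subst adjoint_times_weighted_steering_index[where f = "\<lambda>_. 1" and g = "\<lambda>l. - of_real ((D * real l)^2)"])
        simp_all
    then show ?thesis by (simp only: sum_distrib_left mult.assoc[symmetric] weight)
  qed
  have "(\<lambda>n. \<Sum>l<N n. (0 + 0 * of_real (real l / real n) + - of_real (D^2) * of_real ((real l / real n)^2))
          * (steering_ratio D phi a b ^ l / of_nat (N n)))
      \<longlonglongrightarrow> (if a = b then complex_of_real (- (c\<^sup>2 * D\<^sup>2 / 3)) else 0)"
    by (rule quadratic_weighted_steering_sum_tendsto[OF ab]) (simp add: field_simps)
  then show ?thesis by (simp only: entry)
qed

lemma steering_perp_gram_tendsto:
  assumes ab: "a < r" "b < r"
  shows "(\<lambda>n. (mat_adjoint (Bperp n (N n) c D r phi) * Bperp n (N n) c D r phi) $$ (a, b))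
    \<longlonglongrightarrow> (if a = b then 1 else 0)"
proof -
  let ?f = "\<lambda>x. \<i> * of_real (2 * sqrt 3 / c * (c / 2 - x))"
  have weight: "cnj (?f x) * ?f x = 3 + - of_real (12 / c) * of_real x + of_real (12 / c^2) * of_real (x^2)" for x
  proof -
    have "(2 * sqrt 3 / c * (c / 2 - x))^2 = 12 / c^2 * (c / 2 - x)^2"
      by (simp add: power_mult_distrib power_divide)
    also have "\<dots> = 3 - 12 / c * x + 12 / c^2 * x^2"
      using c_pos by (simp add: power2_eq_square field_simps)
    finally show ?thesis by (simp add: complex_eq_iff power2_eq_square)
  qed
  have entry: "(mat_adjoint (Bperp n (N n) c D r phi) * Bperp n (N n) c D r phi) $$ (a, b)
      = (\<Sum>l<N n. (3 + - of_real (12 / c) * of_real (real l / real n) + of_real (12 / c^2) * of_real ((real l / real n)^2))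
          * (steering_ratio D phi a b ^ l / of_nat (N n)))" for n
  proof -
    have "(mat_adjoint (Bperp n (N n) c D r phi) * Bperp n (N n) c D r phi) $$ (a, b)
        = (\<Sum>l<N n. cnj (?f (real l / real n)) * ?f (real l / real n) * (steering_ratio D phi a b ^ l / of_nat (N n)))"
      using ab c_pos D_pos
      by (subst adjoint_times_weighted_steering_index[where f = "\<lambda>l. ?f (real l / real n)" and g = "\<lambda>l. ?f (real l / real n)"])
        (simp_all add: Bperp_index)
    then show ?thesis by (simp only: weight)
  qed
  have "(\<lambda>n. \<Sum>l<N n. (3 + - of_real (12 / c) * of_real (real l / real n) + of_real (12 / c^2) * of_real ((real l / real n)^2))
          * (steering_ratio D phi a b ^ l / of_nat (N n))) \<longlonglongrightarrow> (if a = b then 1 else 0)"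
    by (rule quadratic_weighted_steering_sum_tendsto[OF ab])
      (use c_pos in \<open>simp add: complex_eq_iff field_simps power2_eq_square\<close>)
  then show ?thesis by (simp only: entry)
qed

lemma steering_perp_cross_gram_tendsto:
  assumes ab: "a < r" "b < r"
  shows "(\<lambda>n. (mat_adjoint (Bperp n (N n) c D r phi) * Bmat (N n) D r phi) $$ (a, b)) \<longlonglongrightarrow> 0"
proof -
  let ?f = "\<lambda>x. \<i> * of_real (2 * sqrt 3 / c * (c / 2 - x))"
  have weight: "cnj (?f x) * 1 = - \<i> * of_real (sqrt 3) + \<i> * of_real (2 * sqrt 3 / c) * of_real x + 0 * of_real (x^2)" for x
    using c_pos by (simp add: complex_eq_iff field_simps)
  have entry: "(mat_adjoint (Bperp n (N n) c D r phi) * Bmat (N n) D r phi) $$ (a, b)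
      = (\<Sum>l<N n. (- \<i> * of_real (sqrt 3) + \<i> * of_real (2 * sqrt 3 / c) * of_real (real l / real n) + 0 * of_real ((real l / real n)^2))
          * (steering_ratio D phi a b ^ l / of_nat (N n)))" for n
  proof -
    have "(mat_adjoint (Bperp n (N n) c D r phi) * Bmat (N n) D r phi) $$ (a, b)
        = (\<Sum>l<N n. cnj (?f (real l / real n)) * 1 * (steering_ratio D phi a b ^ l / of_nat (N n)))"
      using ab c_pos D_pos
      by (subst adjoint_times_weighted_steering_index[where f = "\<lambda>l. ?f (real l / real n)" and g = "\<lambda>_. 1"])
        (simp_all add: Bperp_index)
    then show ?thesis by (simp only: weight)
  qed
  have "(\<lambda>n. \<Sum>l<N n. (- \<i> * of_real (sqrt 3) + \<i> * of_real (2 * sqrt 3 / c) * of_real (real l / real n) + 0 * of_real ((real l / real n)^2))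
          * (steering_ratio D phi a b ^ l / of_nat (N n))) \<longlonglongrightarrow> (if a = b then 0 else 0)"
    by (rule quadratic_weighted_steering_sum_tendsto[OF ab]) (use c_pos in \<open>simp add: complex_eq_iff\<close>)
  then show ?thesis by (simp only: entry if_cancel)
qed

end

section \<open>Euclidean norm, flat matrices and the spectral norm\<close>

lemma vnorm_eq_L2_set: "vnorm x = L2_set (\<lambda>i. cmod (x $ i)) {..<dim_vec x}"
  by (simp add: vnorm_def L2_set_def)

lemma vnorm_nonneg: "0 \<le> vnorm x"
  by (simp add: vnorm_def sum_nonneg)

lemma vnorm_add_le: "dim_vec u = dim_vec v \<Longrightarrow> vnorm (u + v) \<le> vnorm u + vnorm v"
proof -
  assume d: "dim_vec u = dim_vec v"
  have "vnorm (u + v) = L2_set (\<lambda>i. cmod (u $ i + v $ i)) {..<dim_vec v}"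
    unfolding vnorm_eq_L2_set using d by (intro L2_set_cong) auto
  also have "\<dots> \<le> L2_set (\<lambda>i. cmod (u $ i) + cmod (v $ i)) {..<dim_vec v}"
    by (rule L2_set_mono) (auto intro: norm_triangle_ineq)
  also have "\<dots> \<le> L2_set (\<lambda>i. cmod (u $ i)) {..<dim_vec v} + L2_set (\<lambda>i. cmod (v $ i)) {..<dim_vec v}"
    by (rule L2_set_triangle_ineq)
  finally show ?thesis using d by (simp add: vnorm_eq_L2_set)
qed

lemma vnorm_minus_commute: "dim_vec u = dim_vec v \<Longrightarrow> vnorm (u - v) = vnorm (v - u)"
  unfolding vnorm_def by (intro arg_cong[where f = sqrt] sum.cong) (auto simp: norm_minus_commute)

lemma sum_norm_le_sqrt_dim_vnorm: "(\<Sum>i<dim_vec x. cmod (x $ i)) \<le> sqrt (real (dim_vec x)) * vnorm x"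
proof -
  have "(\<Sum>i<dim_vec x. cmod (x $ i)) = (\<Sum>i<dim_vec x. \<bar>cmod (x $ i)\<bar> * \<bar>1\<bar>)" by simp
  also have "\<dots> \<le> L2_set (\<lambda>i. cmod (x $ i)) {..<dim_vec x} * L2_set (\<lambda>i. 1) {..<dim_vec x}"
    by (rule L2_set_mult_ineq)
  also have "\<dots> = sqrt (real (dim_vec x)) * vnorm x" by (simp add: L2_set_constant vnorm_eq_L2_set)
  finally show ?thesis .
qed

lemma vnorm_le_sqrt_dim_mult:
  assumes "\<And>l. l < dim_vec v \<Longrightarrow> cmod (v $ l) \<le> t" "0 \<le> t"
  shows "vnorm v \<le> sqrt (real (dim_vec v)) * t"
proof -
  have "vnorm v \<le> L2_set (\<lambda>i. t) {..<dim_vec v}"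
    unfolding vnorm_eq_L2_set by (rule L2_set_mono) (use assms in auto)
  also have "\<dots> = sqrt (real (dim_vec v)) * t" using assms(2) by (simp add: L2_set_constant)
  finally show ?thesis .
qed

lemma vnorm_unit_vec: "0 < n \<Longrightarrow> vnorm (unit_vec n 0 :: complex vec) = 1"
proof -
  assume n: "0 < n"
  have "(\<Sum>i<n. (cmod (unit_vec n 0 $ i :: complex))^2) = (\<Sum>i<n. if i = 0 then 1 else 0)"
    by (intro sum.cong) auto
  also have "\<dots> = 1" using n by simp
  finally show ?thesis unfolding vnorm_def by simp
qed

lemma cinner_minus_left:
  "dim_vec a = dim_vec w \<Longrightarrow> dim_vec b = dim_vec w \<Longrightarrow> cinner (a - b) w = cinner a w - cinner b w"
  by (simp add: cinner_def algebra_simps sum_subtractf)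

lemma cinner_self_eq_0_imp: "cinner d d = 0 \<Longrightarrow> d = 0\<^sub>v (dim_vec d)"
proof -
  assume h: "cinner d d = 0"
  have "complex_of_real (\<Sum>i<dim_vec d. (cmod (d $ i))^2) = cinner d d"
    unfolding cinner_def of_real_sum by (intro sum.cong refl) (rule complex_norm_square)
  then have "(\<Sum>i<dim_vec d. (cmod (d $ i))^2) = 0" using h of_real_eq_0_iff by metis
  then have "\<forall>i\<in>{..<dim_vec d}. (cmod (d $ i))^2 = 0" by (subst (asm) sum_nonneg_eq_0_iff) auto
  then show ?thesis by (intro eq_vecI) auto
qed

lemma cinner_mult_mat_vec_right:
  assumes "B \<in> carrier_mat N m" "u \<in> carrier_vec m" "v \<in> carrier_vec N"
  shows "cinner v (B *\<^sub>v u) = (\<Sum>p<m. (mat_adjoint B *\<^sub>v v) $ p * cnj (u $ p))"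
proof -
  have "cinner v (B *\<^sub>v u) = (\<Sum>l<N. \<Sum>p<m. cnj (B $$ (l,p)) * v $ l * cnj (u $ p))"
    unfolding cinner_def using assms
    by (intro sum.cong) (auto simp: row_scalar_prod_sum sum_distrib_left algebra_simps)
  also have "\<dots> = (\<Sum>p<m. \<Sum>l<N. cnj (B $$ (l,p)) * v $ l * cnj (u $ p))" by (rule sum.swap)
  also have "\<dots> = (\<Sum>p<m. (mat_adjoint B *\<^sub>v v) $ p * cnj (u $ p))"
    using assms by (intro sum.cong) (auto simp: row_scalar_prod_sum sum_distrib_right)
  finally show ?thesis .
qed

lemma vnorm_le_of_orthogonal_residual:
  assumes "dim_vec x = dim_vec y" "cinner (x - y) y = 0"
  shows "vnorm y \<le> vnorm x"
proof -
  let ?n = "dim_vec y"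
  have "(cmod (x $ i))^2 = (cmod (y $ i))^2 + (cmod ((x - y) $ i))^2 + 2 * Re ((x - y) $ i * cnj (y $ i))"
    if "i < ?n" for i
  proof -
    have "x $ i = y $ i + (x - y) $ i" using assms that by simp
    then show ?thesis by (simp only: cmod_power2) (simp add: power2_eq_square algebra_simps)
  qed
  then have "(\<Sum>i<?n. (cmod (x $ i))^2)
      = (\<Sum>i<?n. (cmod (y $ i))^2) + (\<Sum>i<?n. (cmod ((x - y) $ i))^2) + 2 * Re (cinner (x - y) y)"
    using assms(1) by (simp add: cinner_def sum.distrib Re_sum sum_distrib_left)
  also have "\<dots> \<ge> (\<Sum>i<?n. (cmod (y $ i))^2)"
    using assms(2) by (simp add: sum_nonneg)
  finally show ?thesis unfolding vnorm_def using assms(1) by simp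
qed

text \<open>For a flat matrix B the operator norm of B X B* is at most the entrywise l1-norm of X,
  independently of the number of rows.\<close>

definition flat_mat :: "complex mat \<Rightarrow> bool" where
  "flat_mat B \<longleftrightarrow> (\<forall>l<dim_row B. \<forall>p<dim_col B. cmod (B $$ (l,p)) \<le> 1 / sqrt (real (dim_row B)))"

lemma flat_mat_Bmat: "flat_mat (Bmat N D r phi)"
  by (simp add: flat_mat_def norm_bent)

lemma flat_mat_col_block: "flat_mat B \<Longrightarrow> blk_start j i + j i \<le> dim_col B \<Longrightarrow> flat_mat (col_block B j i)"
  unfolding flat_mat_def col_block_def by auto

lemma vnorm_flat_mult_le:
  assumes "flat_mat B" "dim_vec v = dim_col B"
  shows "vnorm (B *\<^sub>v v) \<le> (\<Sum>p<dim_col B. cmod (v $ p))"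
proof -
  let ?N = "dim_row B"
  let ?t = "(\<Sum>p<dim_col B. cmod (v $ p)) / sqrt (real ?N)"
  have entry_le: "cmod ((B *\<^sub>v v) $ l) \<le> ?t" if l: "l < ?N" for l
  proof -
    have "cmod ((B *\<^sub>v v) $ l) = cmod (\<Sum>p<dim_col B. B $$ (l,p) * v $ p)"
      using l assms(2) by (subst mult_mat_vec_index_sum) auto
    also have "\<dots> \<le> (\<Sum>p<dim_col B. cmod (B $$ (l,p)) * cmod (v $ p))"
      by (rule order_trans[OF norm_sum]) (simp add: norm_mult)
    also have "\<dots> \<le> (\<Sum>p<dim_col B. 1 / sqrt (real ?N) * cmod (v $ p))"
      using assms(1) l unfolding flat_mat_def by (intro sum_mono mult_right_mono) auto
    finally show ?thesis by (simp add: sum_divide_distrib)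
  qed
  have "vnorm (B *\<^sub>v v) \<le> sqrt (real ?N) * ?t"
    using vnorm_le_sqrt_dim_mult[of "B *\<^sub>v v" ?t] entry_le by (simp add: sum_nonneg)
  also have "\<dots> \<le> (\<Sum>p<dim_col B. cmod (v $ p))"
    by (cases "?N = 0") (simp_all add: sum_nonneg)
  finally show ?thesis .
qed

lemma norm_adjoint_flat_mult_index_le:
  assumes "flat_mat B" "dim_vec x = dim_row B" "q < dim_col B"
  shows "cmod ((mat_adjoint B *\<^sub>v x) $ q) \<le> vnorm x"
proof -
  let ?N = "dim_row B"
  have "cmod ((mat_adjoint B *\<^sub>v x) $ q) = cmod (\<Sum>l<?N. cnj (B $$ (l,q)) * x $ l)"
    using assms by (subst mult_mat_vec_index_sum) auto
  also have "\<dots> \<le> (\<Sum>l<?N. cmod (B $$ (l,q)) * cmod (x $ l))"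
    by (rule order_trans[OF norm_sum]) (simp add: norm_mult)
  also have "\<dots> \<le> (\<Sum>l<?N. 1 / sqrt (real ?N) * cmod (x $ l))"
    using assms(1,3) unfolding flat_mat_def by (intro sum_mono mult_right_mono) auto
  also have "\<dots> = (\<Sum>l<dim_vec x. cmod (x $ l)) / sqrt (real ?N)"
    using assms(2) by (simp add: sum_divide_distrib)
  also have "\<dots> \<le> sqrt (real ?N) * vnorm x / sqrt (real ?N)"
    using sum_norm_le_sqrt_dim_vnorm[of x] assms(2) by (intro divide_right_mono) simp_all
  also have "\<dots> \<le> vnorm x" by (cases "?N = 0") (simp_all add: vnorm_nonneg)
  finally show ?thesis .
qed

lemma vnorm_flat_sandwich_mult_le:
  assumes B: "flat_mat B" "B \<in> carrier_mat N r" and X: "X \<in> carrier_mat r r" and x: "x \<in> carrier_vec N"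
  shows "vnorm ((B * X * mat_adjoint B) *\<^sub>v x) \<le> (\<Sum>p<r. \<Sum>q<r. cmod (X $$ (p,q))) * vnorm x"
proof -
  define y where "y = mat_adjoint B *\<^sub>v x"
  have y: "y \<in> carrier_vec r"
    unfolding y_def using carrier_mat_adjoint[OF B(2)] x by (rule mult_mat_vec_carrier)
  have "(B * X * mat_adjoint B) *\<^sub>v x = (B * X) *\<^sub>v y"
    using B X x by (simp add: y_def assoc_mult_mat_vec[of _ N r _ N])
  also have "\<dots> = B *\<^sub>v (X *\<^sub>v y)" by (rule assoc_mult_mat_vec[OF B(2) X y])
  finally have "(B * X * mat_adjoint B) *\<^sub>v x = B *\<^sub>v (X *\<^sub>v y)" .
  then have "vnorm ((B * X * mat_adjoint B) *\<^sub>v x) \<le> (\<Sum>p<r. cmod ((X *\<^sub>v y) $ p))"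
    using vnorm_flat_mult_le[OF B(1), of "X *\<^sub>v y"] B X by simp
  also have "\<dots> \<le> (\<Sum>p<r. \<Sum>q<r. cmod (X $$ (p,q)) * vnorm x)"
  proof (rule sum_mono)
    fix p assume p: "p \<in> {..<r}"
    have "cmod ((X *\<^sub>v y) $ p) = cmod (\<Sum>q<r. X $$ (p,q) * y $ q)"
      using p X y by (subst mult_mat_vec_index_sum) auto
    also have "\<dots> \<le> (\<Sum>q<r. cmod (X $$ (p,q)) * cmod (y $ q))"
      by (rule order_trans[OF norm_sum]) (simp add: norm_mult)
    also have "\<dots> \<le> (\<Sum>q<r. cmod (X $$ (p,q)) * vnorm x)"
      using norm_adjoint_flat_mult_index_le[OF B(1)] B x by (intro sum_mono mult_left_mono) (auto simp: y_def)
    finally show "cmod ((X *\<^sub>v y) $ p) \<le> (\<Sum>q<r. cmod (X $$ (p,q)) * vnorm x)" .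
  qed
  also have "\<dots> = (\<Sum>p<r. \<Sum>q<r. cmod (X $$ (p,q))) * vnorm x" by (simp add: sum_distrib_right)
  finally show ?thesis .
qed

lemma spec_norm_le:
  fixes A :: "complex mat"
  assumes "0 < dim_col A" "\<And>x. x \<in> carrier_vec (dim_col A) \<Longrightarrow> vnorm (A *\<^sub>v x) \<le> t * vnorm x"
  shows "\<bar>spec_norm A\<bar> \<le> t"
proof -
  define S where "S = {vnorm (A *\<^sub>v x) | x. x \<in> carrier_vec (dim_col A) \<and> vnorm x = 1}"
  have mem: "vnorm (A *\<^sub>v unit_vec (dim_col A) 0) \<in> S"
    unfolding S_def using vnorm_unit_vec[OF assms(1)] by auto
  have ub: "\<forall>y\<in>S. y \<le> t" unfolding S_def by (fastforce dest: assms(2))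
  have "spec_norm A = Sup S" by (simp add: spec_norm_def S_def)
  moreover have "Sup S \<le> t" using cSup_least[of S t] mem ub by blast
  moreover have "0 \<le> Sup S"
  proof -
    have "bdd_above S" using ub by (auto intro: bdd_aboveI)
    from cSup_upper[OF mem this] show ?thesis
      using vnorm_nonneg[of "A *\<^sub>v unit_vec (dim_col A) 0"] by linarith
  qed
  ultimately show ?thesis by simp
qed

section \<open>Gram deviation and orthogonal projections\<close>

lemma vnorm_power2: "(vnorm z)^2 = (\<Sum>i<dim_vec z. (cmod (z $ i))^2)"
  by (simp add: vnorm_def sum_nonneg)

lemma norm_index_le_vnorm: "p < dim_vec z \<Longrightarrow> cmod (z $ p) \<le> vnorm z"
  unfolding vnorm_def by (rule real_le_rsqrt) (rule member_le_sum, auto)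

definition quad_form :: "complex mat \<Rightarrow> complex vec \<Rightarrow> complex" where
  "quad_form G z = (\<Sum>p<dim_vec z. \<Sum>q<dim_vec z. cnj (z $ p) * G $$ (p,q) * z $ q)"

definition gram_dev :: "complex mat \<Rightarrow> real" where
  "gram_dev G = (\<Sum>p<dim_row G. \<Sum>q<dim_row G. cmod (G $$ (p,q) - (if p = q then 1 else 0)))"

lemma gram_dev_nonneg: "0 \<le> gram_dev G"
  by (simp add: gram_dev_def sum_nonneg)

lemma of_real_vnorm_mult_power2:
  assumes "B \<in> carrier_mat N m" "z \<in> carrier_vec m"
  shows "complex_of_real ((vnorm (B *\<^sub>v z))^2) = quad_form (mat_adjoint B * B) z"
proof -
  have "complex_of_real ((vnorm (B *\<^sub>v z))^2) = (\<Sum>l<N. cnj ((B *\<^sub>v z) $ l) * (B *\<^sub>v z) $ l)"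
    unfolding vnorm_power2 of_real_sum using assms
    by (intro sum.cong) (simp_all add: mult.commute flip: complex_norm_square)
  also have "\<dots> = (\<Sum>l<N. \<Sum>p<m. \<Sum>q<m. cnj (z $ p) * (cnj (B $$ (l,p)) * B $$ (l,q)) * z $ q)"
    using assms
    by (intro sum.cong) (auto simp: row_scalar_prod_sum sum_distrib_left sum_distrib_right algebra_simps)
  also have "\<dots> = (\<Sum>p<m. \<Sum>q<m. \<Sum>l<N. cnj (z $ p) * (cnj (B $$ (l,p)) * B $$ (l,q)) * z $ q)"
    by (subst sum.swap) (intro sum.cong refl sum.swap)
  also have "\<dots> = quad_form (mat_adjoint B * B) z"
    unfolding quad_form_def carrier_vecD[OF assms(2)]
  proof (intro sum.cong refl)
    fix p q assume "p \<in> {..<m}" "q \<in> {..<m}"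
    then have "(mat_adjoint B * B) $$ (p,q) = (\<Sum>l<N. cnj (B $$ (l,p)) * B $$ (l,q))"
      using assms by (subst adjoint_times_mat_index) auto
    then show "(\<Sum>l<N. cnj (z $ p) * (cnj (B $$ (l,p)) * B $$ (l,q)) * z $ q)
        = cnj (z $ p) * (mat_adjoint B * B) $$ (p,q) * z $ q"
      by (simp add: sum_distrib_left sum_distrib_right)
  qed
  finally show ?thesis .
qed

lemma quad_form_eq_sum_mult:
  assumes "G \<in> carrier_mat m m" "z \<in> carrier_vec m"
  shows "quad_form G z = (\<Sum>p<m. cnj (z $ p) * (G *\<^sub>v z) $ p)"
  unfolding quad_form_def carrier_vecD[OF assms(2)] using assms
  by (intro sum.cong refl) (simp add: row_scalar_prod_sum sum_distrib_left mult.assoc)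

lemma quad_form_lower_bound:
  assumes G: "G \<in> carrier_mat m m" and z: "z \<in> carrier_vec m"
  shows "(1 - gram_dev G) * (vnorm z)^2 \<le> Re (quad_form G z)"
proof -
  let ?E = "\<lambda>p q. G $$ (p,q) - (if p = q then 1 else 0)"
  let ?R = "\<Sum>p<m. \<Sum>q<m. cnj (z $ p) * ?E p q * z $ q"
  have diag: "(\<Sum>q<m. cnj (z $ p) * (if p = q then 1 else 0) * z $ q) = of_real ((cmod (z $ p))^2)"
    if "p < m" for p
  proof -
    have "(\<Sum>q<m. cnj (z $ p) * (if p = q then 1 else 0) * z $ q) = cnj (z $ p) * z $ p"
      using that by (simp add: if_distrib if_distribR cong: if_cong)
    then show ?thesis by (metis complex_norm_square mult.commute)
  qed
  have "quad_form G z = (\<Sum>p<m. \<Sum>q<m. cnj (z $ p) * (if p = q then 1 else 0) * z $ q) + ?R"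
    unfolding quad_form_def carrier_vecD[OF z] by (simp add: sum.distrib[symmetric] algebra_simps)
  also have "(\<Sum>p<m. \<Sum>q<m. cnj (z $ p) * (if p = q then 1 else 0) * z $ q) = of_real ((vnorm z)^2)"
    using z by (simp add: diag vnorm_power2 of_real_sum)
  finally have eq: "Re (quad_form G z) = (vnorm z)^2 + Re ?R" by simp
  have "cmod ?R \<le> (\<Sum>p<m. \<Sum>q<m. cmod (?E p q) * (vnorm z)^2)"
  proof (intro order_trans[OF norm_sum] sum_mono order_trans[OF norm_sum])
    fix p q assume "p \<in> {..<m}" "q \<in> {..<m}"
    then have "cmod (z $ p) * cmod (z $ q) \<le> vnorm z * vnorm z"
      using z by (intro mult_mono norm_index_le_vnorm) (simp_all add: vnorm_nonneg)
    then have "cmod (?E p q) * (cmod (z $ p) * cmod (z $ q)) \<le> cmod (?E p q) * (vnorm z)^2"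
      by (intro mult_left_mono) (simp_all add: power2_eq_square)
    moreover have "cmod (cnj (z $ p) * ?E p q * z $ q) = cmod (?E p q) * (cmod (z $ p) * cmod (z $ q))"
      by (simp only: norm_mult complex_mod_cnj mult_ac)
    ultimately show "cmod (cnj (z $ p) * ?E p q * z $ q) \<le> cmod (?E p q) * (vnorm z)^2"
      by simp
  qed
  also have "\<dots> = gram_dev G * (vnorm z)^2"
    using G by (simp add: gram_dev_def sum_distrib_right)
  finally have "- (gram_dev G * (vnorm z)^2) \<le> Re ?R"
    using abs_Re_le_cmod[of ?R] by linarith
  with eq show ?thesis by (simp add: algebra_simps)
qed

lemma sum_norm_residual_le_gram_dev:
  assumes G: "G \<in> carrier_mat m m" and z: "z \<in> carrier_vec m"
  shows "(\<Sum>p<m. cmod ((z - G *\<^sub>v z) $ p)) \<le> gram_dev G * vnorm z"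
proof -
  let ?E = "\<lambda>p q. G $$ (p,q) - (if p = q then 1 else 0)"
  have "cmod ((z - G *\<^sub>v z) $ p) \<le> (\<Sum>q<m. cmod (?E p q) * vnorm z)" if p: "p < m" for p
  proof -
    have "(z - G *\<^sub>v z) $ p = (\<Sum>q<m. (if p = q then 1 else 0) * z $ q) - (\<Sum>q<m. G $$ (p,q) * z $ q)"
      using p G z by (simp add: row_scalar_prod_sum if_distrib if_distribR cong: if_cong)
    also have "\<dots> = - (\<Sum>q<m. ?E p q * z $ q)"
      by (simp only: sum_subtractf[symmetric] sum_negf[symmetric]) (intro sum.cong refl, simp add: algebra_simps)
    finally have "(z - G *\<^sub>v z) $ p = - (\<Sum>q<m. ?E p q * z $ q)" .
    then have "cmod ((z - G *\<^sub>v z) $ p) \<le> (\<Sum>q<m. cmod (?E p q) * cmod (z $ q))"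
      by (simp add: norm_mult order_trans[OF norm_sum])
    also have "\<dots> \<le> (\<Sum>q<m. cmod (?E p q) * vnorm z)"
      using z by (intro sum_mono mult_left_mono norm_index_le_vnorm) auto
    finally show ?thesis .
  qed
  then have "(\<Sum>p<m. cmod ((z - G *\<^sub>v z) $ p)) \<le> (\<Sum>p<m. \<Sum>q<m. cmod (?E p q) * vnorm z)"
    by (intro sum_mono) simp
  also have "\<dots> = gram_dev G * vnorm z"
    using G by (simp add: gram_dev_def sum_distrib_right)
  finally show ?thesis .
qed

lemma gram_dev_tendsto_0:
  assumes G: "\<forall>\<^sub>F n in F. G n \<in> carrier_mat m m"
    and lim: "\<And>a b. a < m \<Longrightarrow> b < m \<Longrightarrow> ((\<lambda>n. G n $$ (a,b)) \<longlongrightarrow> (if a = b then 1 else 0)) F"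
  shows "((\<lambda>n. gram_dev (G n)) \<longlongrightarrow> 0) F"
proof -
  have "((\<lambda>n. \<Sum>p<m. \<Sum>q<m. cmod (G n $$ (p,q) - (if p = q then 1 else 0))) \<longlongrightarrow> (\<Sum>p<m. \<Sum>q<m. 0)) F"
  proof (intro tendsto_sum tendsto_norm_zero)
    fix p q assume "p \<in> {..<m}" "q \<in> {..<m}"
    then have "((\<lambda>n. G n $$ (p,q)) \<longlongrightarrow> (if p = q then 1 else 0)) F" by (intro lim) auto
    from tendsto_diff[OF this tendsto_const[of "if p = q then 1 else 0"]]
    show "((\<lambda>n. G n $$ (p,q) - (if p = q then 1 else 0)) \<longlongrightarrow> 0) F" by simp
  qed
  moreover have "\<forall>\<^sub>F n in F. (\<Sum>p<m. \<Sum>q<m. cmod (G n $$ (p,q) - (if p = q then 1 else 0))) = gram_dev (G n)"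
    using G by eventually_elim (simp add: gram_dev_def)
  ultimately show ?thesis by (simp add: tendsto_cong)
qed

lemma vnorm_power2_le_quad_form:
  assumes "G \<in> carrier_mat m m" "gram_dev G \<le> 1/2" "z \<in> carrier_vec m"
  shows "(vnorm z)^2 \<le> 2 * Re (quad_form G z)"
  using quad_form_lower_bound[OF assms(1,3)] assms(2)
    mult_right_mono[of "1/2" "1 - gram_dev G" "(vnorm z)^2"] by simp

lemma right_inverse_of_small_gram_dev:
  assumes G: "G \<in> carrier_mat m m" and dev: "gram_dev G \<le> 1/2"
  obtains K where "K \<in> carrier_mat m m" "G * K = 1\<^sub>m m"
proof -
  have "z = 0\<^sub>v m" if z: "z \<in> carrier_vec m" and Gz: "G *\<^sub>v z = 0\<^sub>v m" for z
  proof -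
    have "quad_form G z = 0" using z by (simp add: quad_form_eq_sum_mult[OF G z] Gz)
    then have "vnorm z = 0" using vnorm_power2_le_quad_form[OF G dev z] vnorm_nonneg[of z] by simp
    then show ?thesis using z by (intro eq_vecI) (auto simp: vnorm_def sum_nonneg_eq_0_iff)
  qed
  then have "Determinant.det G \<noteq> 0" using det_0_iff_vec_prod_zero_field[OF G] by blast
  from det_non_zero_imp_unit[OF G this] show ?thesis
    using that unfolding Units_def ring_mat_def by auto
qed

lemma mat_eq_if_mult_vec_eq:
  fixes A B :: "complex mat"
  assumes "A \<in> carrier_mat n m" "B \<in> carrier_mat n m" "\<And>x. x \<in> carrier_vec m \<Longrightarrow> A *\<^sub>v x = B *\<^sub>v x"
  shows "A = B"
proof (rule eq_matI)
  have unit: "(M *\<^sub>v unit_vec m b) $ a = M $$ (a,b)" if "M \<in> carrier_mat n m" "a < n" "b < m" for M :: "complex mat" and a b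
  proof -
    have "(M *\<^sub>v unit_vec m b) $ a = (\<Sum>p<m. M $$ (a,p) * unit_vec m b $ p)"
      using that by (subst mult_mat_vec_index_sum) auto
    also have "\<dots> = (\<Sum>p<m. if p = b then M $$ (a,p) else 0)"
      by (intro sum.cong) (auto simp: unit_vec_def)
    finally show ?thesis using that by simp
  qed
  fix a b assume "a < dim_row B" "b < dim_col B"
  then show "A $$ (a,b) = B $$ (a,b)"
    using unit[OF assms(1)] unit[OF assms(2)] assms by (metis carrier_matD unit_vec_carrier)
qed (use assms in auto)

lemma colspace_subset_carrier: "colspace B \<subseteq> carrier_vec (dim_row B)"
  by (auto simp: colspace_def intro: carrier_vecI)

lemma colspace_diff:
  assumes "u \<in> colspace B" "v \<in> colspace B"
  shows "u - v \<in> colspace B"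
proof -
  obtain a c where a: "a \<in> carrier_vec (dim_col B)" "u = B *\<^sub>v a"
    and c: "c \<in> carrier_vec (dim_col B)" "v = B *\<^sub>v c"
    using assms unfolding colspace_def by blast
  have "B \<in> carrier_mat (dim_row B) (dim_col B)" by auto
  from mult_minus_distrib_mat_vec[OF this a(1) c(1)] have "u - v = B *\<^sub>v (a - c)" using a c by simp
  moreover have "a - c \<in> carrier_vec (dim_col B)" using a c by simp
  ultimately show ?thesis unfolding colspace_def by blast
qed

lemma is_orth_proj_unique:
  assumes P1: "is_orth_proj P1 W m" and P2: "is_orth_proj P2 W m"
    and W_sub: "W \<subseteq> carrier_vec m" and W_diff: "\<And>u v. u \<in> W \<Longrightarrow> v \<in> W \<Longrightarrow> u - v \<in> W"
  shows "P1 = P2"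
proof (rule mat_eq_if_mult_vec_eq)
  show c1: "P1 \<in> carrier_mat m m" and c2: "P2 \<in> carrier_mat m m"
    using P1 P2 unfolding is_orth_proj_def by auto
  fix x :: "complex vec" assume x: "x \<in> carrier_vec m"
  have y1: "P1 *\<^sub>v x \<in> W" and o1: "\<And>w. w \<in> W \<Longrightarrow> cinner (x - P1 *\<^sub>v x) w = 0"
    and y2: "P2 *\<^sub>v x \<in> W" and o2: "\<And>w. w \<in> W \<Longrightarrow> cinner (x - P2 *\<^sub>v x) w = 0"
    using P1 P2 x unfolding is_orth_proj_def by auto
  define d where "d = P1 *\<^sub>v x - P2 *\<^sub>v x"
  have dW: "d \<in> W" using W_diff[OF y1 y2] by (simp add: d_def)
  have dim: "dim_vec d = m" using c2 by (simp add: d_def)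
  have "d = (x - P2 *\<^sub>v x) - (x - P1 *\<^sub>v x)"
    using c1 c2 x by (intro eq_vecI) (auto simp: d_def)
  then have "cinner d d = cinner (x - P2 *\<^sub>v x) d - cinner (x - P1 *\<^sub>v x) d"
    using c1 c2 x dim by (metis cinner_minus_left index_minus_vec(2) dim_mult_mat_vec carrier_matD(1) carrier_vecD)
  also have "\<dots> = 0" using o1[OF dW] o2[OF dW] by simp
  finally have "d = 0\<^sub>v m" using cinner_self_eq_0_imp dim by metis
  show "P1 *\<^sub>v x = P2 *\<^sub>v x"
  proof (rule eq_vecI)
    fix i assume i: "i < dim_vec (P2 *\<^sub>v x)"
    then have "d $ i = 0" using \<open>d = 0\<^sub>v m\<close> c2 by simp
    then show "(P1 *\<^sub>v x) $ i = (P2 *\<^sub>v x) $ i" using i c1 c2 unfolding d_def by simp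
  qed (simp add: carrier_matD(1)[OF c1] carrier_matD(1)[OF c2])
qed

lemma proj_colspace_eqI:
  assumes "is_orth_proj P (colspace B) (dim_row B)"
  shows "proj_colspace B = P"
  unfolding proj_colspace_def
proof (rule the_equality)
  fix P' assume "is_orth_proj P' (colspace B) (dim_row B)"
  then show "P' = P" by (rule is_orth_proj_unique[OF _ assms colspace_subset_carrier colspace_diff])
qed (rule assms)

lemma is_orth_proj_gram_inverse:
  assumes B: "B \<in> carrier_mat N m" and K: "K \<in> carrier_mat m m"
    and GK: "(mat_adjoint B * B) * K = 1\<^sub>m m"
  shows "is_orth_proj (B * K * mat_adjoint B) (colspace B) N"
  unfolding is_orth_proj_def
proof (intro conjI ballI)
  let ?P = "B * K * mat_adjoint B"
  have aB: "mat_adjoint B \<in> carrier_mat m N" using B by simp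
  show P: "?P \<in> carrier_mat N N" using mult_carrier_mat[OF mult_carrier_mat[OF B K] aB] .
  fix x :: "complex vec" assume x: "x \<in> carrier_vec N"
  have Bx: "mat_adjoint B *\<^sub>v x \<in> carrier_vec m" using aB x by (rule mult_mat_vec_carrier)
  have Px: "?P *\<^sub>v x = B *\<^sub>v (K *\<^sub>v (mat_adjoint B *\<^sub>v x))"
    by (simp only: assoc_mult_mat_vec[OF mult_carrier_mat[OF B K] aB x] assoc_mult_mat_vec[OF B K Bx])
  moreover have "K *\<^sub>v (mat_adjoint B *\<^sub>v x) \<in> carrier_vec (dim_col B)"
    using B mult_mat_vec_carrier[OF K Bx] by simp
  ultimately show "?P *\<^sub>v x \<in> colspace B" unfolding colspace_def by blast
  have "mat_adjoint B *\<^sub>v (?P *\<^sub>v x) = ((mat_adjoint B * B) * K) *\<^sub>v (mat_adjoint B *\<^sub>v x)"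
    unfolding Px using assoc_mult_mat_vec[OF mult_carrier_mat[OF aB B] K Bx]
      assoc_mult_mat_vec[OF aB B mult_mat_vec_carrier[OF K Bx]] by simp
  also have "\<dots> = mat_adjoint B *\<^sub>v x" using GK aB x by simp
  finally have residual: "mat_adjoint B *\<^sub>v (x - ?P *\<^sub>v x) = 0\<^sub>v m"
    using aB x P by (simp add: mult_minus_distrib_mat_vec)
  fix w assume "w \<in> colspace B"
  then obtain u where u: "u \<in> carrier_vec m" and w: "w = B *\<^sub>v u" using B unfolding colspace_def by auto
  have xP: "x - ?P *\<^sub>v x \<in> carrier_vec N" using x P by simp
  show "cinner (x - ?P *\<^sub>v x) w = 0"
    unfolding w cinner_mult_mat_vec_right[OF B u xP] residual using u by simp
qed

lemma vnorm_le_of_small_gram_dev: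
  assumes B: "B \<in> carrier_mat N m" and dev: "gram_dev (mat_adjoint B * B) \<le> 1/2"
    and z: "z \<in> carrier_vec m" and x: "x \<in> carrier_vec N"
    and orth: "cinner (x - B *\<^sub>v z) (B *\<^sub>v z) = 0"
  shows "vnorm z \<le> 2 * vnorm x"
proof -
  have G: "mat_adjoint B * B \<in> carrier_mat m m"
    using mult_carrier_mat[OF carrier_mat_adjoint[OF B] B] .
  have "Re (quad_form (mat_adjoint B * B) z) = (vnorm (B *\<^sub>v z))^2"
    using of_real_vnorm_mult_power2[OF B z] by (metis Re_complex_of_real)
  then have "(vnorm z)^2 \<le> 2 * (vnorm (B *\<^sub>v z))^2"
    using vnorm_power2_le_quad_form[OF G dev z] by simp
  moreover have "vnorm (B *\<^sub>v z) \<le> vnorm x"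
    using x B orth by (intro vnorm_le_of_orthogonal_residual) simp_all
  then have "(vnorm (B *\<^sub>v z))^2 \<le> (vnorm x)^2"
    using vnorm_nonneg by (intro power_mono)
  ultimately have "(vnorm z)^2 \<le> 4 * (vnorm x)^2"
    using zero_le_power2[of "vnorm x"] by linarith
  then have "(vnorm z)^2 \<le> (2 * vnorm x)^2"
    by (simp add: power_mult_distrib)
  then show ?thesis by (rule power2_le_imp_le) (simp add: vnorm_nonneg)
qed

lemma vnorm_proj_colspace_minus_gram_le:
  assumes B: "B \<in> carrier_mat N m" "flat_mat B" and dev: "gram_dev (mat_adjoint B * B) \<le> 1/2"
    and x: "x \<in> carrier_vec N"
  shows "vnorm ((proj_colspace B - B * mat_adjoint B) *\<^sub>v x) \<le> 2 * gram_dev (mat_adjoint B * B) * vnorm x"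
proof -
  define G where "G = mat_adjoint B * B"
  have aB: "mat_adjoint B \<in> carrier_mat m N" using B by simp
  have G: "G \<in> carrier_mat m m" unfolding G_def using aB B(1) by (rule mult_carrier_mat)
  obtain K where K: "K \<in> carrier_mat m m" and GK: "G * K = 1\<^sub>m m"
    using right_inverse_of_small_gram_dev[OF G dev[folded G_def]] .
  define P where "P = B * K * mat_adjoint B"
  have proj: "is_orth_proj P (colspace B) N"
    unfolding P_def by (rule is_orth_proj_gram_inverse[OF B(1) K GK[unfolded G_def]])
  then have P_eq: "proj_colspace B = P" using B by (intro proj_colspace_eqI) simp
  have P: "P \<in> carrier_mat N N" using proj by (simp add: is_orth_proj_def)
  define z where "z = K *\<^sub>v (mat_adjoint B *\<^sub>v x)"
  have z: "z \<in> carrier_vec m" using K aB x by (simp add: z_def)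
  have Gz: "G *\<^sub>v z = mat_adjoint B *\<^sub>v x"
    using GK G K aB x by (simp add: z_def flip: assoc_mult_mat_vec[of _ m m _ m])
  have Bx: "mat_adjoint B *\<^sub>v x \<in> carrier_vec m" using aB x by (rule mult_mat_vec_carrier)
  have Bz: "B *\<^sub>v z = P *\<^sub>v x"
    using B K aB x by (simp add: z_def P_def assoc_mult_mat_vec[of _ N m _ N] assoc_mult_mat_vec[OF B(1) K Bx])
  have "(P - B * mat_adjoint B) *\<^sub>v x = P *\<^sub>v x - B *\<^sub>v (G *\<^sub>v z)"
    using P B aB x by (simp add: Gz minus_mult_distrib_mat_vec assoc_mult_mat_vec[OF B(1) aB x])
  also have "\<dots> = B *\<^sub>v (z - G *\<^sub>v z)"
    unfolding Bz[symmetric] using B G z by (simp add: mult_minus_distrib_mat_vec)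
  finally have "vnorm ((P - B * mat_adjoint B) *\<^sub>v x) \<le> (\<Sum>p<m. cmod ((z - G *\<^sub>v z) $ p))"
    using vnorm_flat_mult_le[OF B(2), of "z - G *\<^sub>v z"] B G z by simp
  also have "\<dots> \<le> gram_dev G * vnorm z" by (rule sum_norm_residual_le_gram_dev[OF G z])
  also have "vnorm z \<le> 2 * vnorm x"
  proof (rule vnorm_le_of_small_gram_dev[OF B(1) dev z x])
    have "B *\<^sub>v z \<in> colspace B" using B z unfolding colspace_def by auto
    then show "cinner (x - B *\<^sub>v z) (B *\<^sub>v z) = 0"
      using proj x unfolding Bz is_orth_proj_def by blast
  qed
  finally show ?thesis
    using gram_dev_nonneg[of G] by (simp add: P_eq G_def mult_left_mono mult.assoc)
qed

lemma is_orth_proj_proj_colspace: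
  assumes B: "B \<in> carrier_mat N m" and dev: "gram_dev (mat_adjoint B * B) \<le> 1/2"
  shows "is_orth_proj (proj_colspace B) (colspace B) N"
proof -
  have G: "mat_adjoint B * B \<in> carrier_mat m m"
    using mult_carrier_mat[OF carrier_mat_adjoint[OF B] B] .
  obtain K where K: "K \<in> carrier_mat m m" and GK: "mat_adjoint B * B * K = 1\<^sub>m m"
    using right_inverse_of_small_gram_dev[OF G dev] .
  have "is_orth_proj (B * K * mat_adjoint B) (colspace B) N"
    by (rule is_orth_proj_gram_inverse[OF B K GK])
  moreover from this have "proj_colspace B = B * K * mat_adjoint B"
    using B by (intro proj_colspace_eqI) simp
  ultimately show ?thesis by simp
qed

section \<open>Coefficients of the left singular vectors\<close>

text \<open>With P = B S* = U Sigma V*, the left singular vectors are U = B W for the coefficient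
  matrix W = S* V Sigma^-1.\<close>

definition svd_coefficients :: "complex mat \<Rightarrow> complex mat \<Rightarrow> (nat \<Rightarrow> real) \<Rightarrow> nat \<Rightarrow> complex mat" where
  "svd_coefficients S V \<sigma> r = mat_adjoint S * V * mat_diag r (\<lambda>k. complex_of_real (1 / \<sigma> k))"

context
  fixes B S U V :: "complex mat" and \<sigma> :: "nat \<Rightarrow> real" and N n r :: nat
  assumes B: "B \<in> carrier_mat N r" and S: "S \<in> carrier_mat n r"
    and U: "U \<in> carrier_mat N r" and V: "V \<in> carrier_mat n r"
    and UU: "mat_adjoint U * U = 1\<^sub>m r" and VV: "mat_adjoint V * V = 1\<^sub>m r"
    and \<sigma>_pos: "\<And>k. k < r \<Longrightarrow> 0 < \<sigma> k"
    and svd: "B * mat_adjoint S = U * mat_diag r (\<lambda>k. complex_of_real (\<sigma> k)) * mat_adjoint V"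
begin

lemma svd_coefficients_carrier: "svd_coefficients S V \<sigma> r \<in> carrier_mat r r"
  unfolding svd_coefficients_def using mult_carrier_mat[OF mult_carrier_mat[OF carrier_mat_adjoint[OF S] V] mat_diag_dim] .

lemma svd_left_factor_eq: "U = B * svd_coefficients S V \<sigma> r"
proof -
  define \<Sigma> where "\<Sigma> = mat_diag r (\<lambda>k. complex_of_real (\<sigma> k))"
  define \<Sigma>i where "\<Sigma>i = mat_diag r (\<lambda>k. complex_of_real (1 / \<sigma> k))"
  have Sc: "\<Sigma> \<in> carrier_mat r r" "\<Sigma>i \<in> carrier_mat r r" by (simp_all add: \<Sigma>_def \<Sigma>i_def)
  have aS: "mat_adjoint S \<in> carrier_mat r n" and aV: "mat_adjoint V \<in> carrier_mat r n" using S V by auto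
  have pos: "\<forall>k<r. 0 < \<sigma> k" using \<sigma>_pos by blast
  have SSi: "\<Sigma> * \<Sigma>i = 1\<^sub>m r"
    unfolding \<Sigma>_def \<Sigma>i_def mat_diag_diag mat_diag_one[symmetric]
    using pos by (intro eq_matI) (auto simp: mat_diag_def simp flip: of_real_mult)
  have "B * (mat_adjoint S * V * \<Sigma>i) = (B * mat_adjoint S) * V * \<Sigma>i"
    using B aS V Sc by (simp add: assoc_mult_mat[of _ N r _ n] assoc_mult_mat[of _ N r _ r _ r] assoc_mult_mat[of _ r n _ r _ r])
  also have "\<dots> = U * \<Sigma> * mat_adjoint V * V * \<Sigma>i" unfolding svd \<Sigma>_def[symmetric] ..
  also have "U * \<Sigma> * mat_adjoint V * V = U * \<Sigma> * (mat_adjoint V * V)"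
    using U Sc aV V by (intro assoc_mult_mat[of _ N r]) auto
  also have "\<dots> = U * \<Sigma>" unfolding VV using U Sc by simp
  also have "U * \<Sigma> * \<Sigma>i = U * (\<Sigma> * \<Sigma>i)" using U Sc by (intro assoc_mult_mat[of _ N r]) auto
  also have "\<dots> = U" unfolding SSi using U by simp
  finally show ?thesis by (simp add: \<Sigma>i_def svd_coefficients_def)
qed

lemma svd_adjoint_eq: "S * mat_adjoint B = V * mat_diag r (\<lambda>k. complex_of_real (\<sigma> k)) * mat_adjoint U"
proof -
  define \<Sigma> where "\<Sigma> = mat_diag r (\<lambda>k. complex_of_real (\<sigma> k))"
  have Sc: "\<Sigma> \<in> carrier_mat r r" by (simp add: \<Sigma>_def)
  have "S * mat_adjoint B = mat_adjoint (B * mat_adjoint S)"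
    using B carrier_mat_adjoint[OF S] by (simp add: adjoint_mult)
  also have "\<dots> = mat_adjoint (U * \<Sigma> * mat_adjoint V)" unfolding svd \<Sigma>_def ..
  also have "\<dots> = mat_adjoint (mat_adjoint V) * mat_adjoint (U * \<Sigma>)"
    using U Sc V by (intro adjoint_mult[of _ N r]) auto
  also have "mat_adjoint (U * \<Sigma>) = mat_adjoint \<Sigma> * mat_adjoint U"
    using U Sc by (intro adjoint_mult[of _ N r]) auto
  also have "mat_adjoint (mat_adjoint V) * (mat_adjoint \<Sigma> * mat_adjoint U) = V * mat_adjoint \<Sigma> * mat_adjoint U"
    using V Sc U by (simp add: assoc_mult_mat[of _ n r _ r _ N])
  also have "mat_adjoint \<Sigma> = \<Sigma>" unfolding \<Sigma>_def by (rule adjoint_mat_diag_of_real)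
  finally show ?thesis unfolding \<Sigma>_def .
qed

lemma svd_coefficients_orthonormal:
  defines "W \<equiv> svd_coefficients S V \<sigma> r"
  shows "mat_adjoint W * (mat_adjoint B * B) * W = 1\<^sub>m r"
proof -
  have Wc: "W \<in> carrier_mat r r" unfolding W_def by (rule svd_coefficients_carrier)
  have aW: "mat_adjoint W \<in> carrier_mat r r" and aB: "mat_adjoint B \<in> carrier_mat r N" using Wc B by auto
  have BW: "B * W = U" unfolding W_def by (rule svd_left_factor_eq[symmetric])
  have "mat_adjoint W * (mat_adjoint B * B) * W = mat_adjoint W * ((mat_adjoint B * B) * W)"
    using aW aB B Wc by (intro assoc_mult_mat[of _ r r]) auto
  also have "(mat_adjoint B * B) * W = mat_adjoint B * (B * W)"
    using aB B Wc by (intro assoc_mult_mat[of _ r N]) auto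
  also have "mat_adjoint W * (mat_adjoint B * (B * W)) = (mat_adjoint W * mat_adjoint B) * (B * W)"
    using aW aB B Wc by (intro assoc_mult_mat[of _ r r, symmetric]) auto
  also have "mat_adjoint W * mat_adjoint B = mat_adjoint (B * W)" using adjoint_mult[OF B Wc] by simp
  finally show ?thesis unfolding BW UU .
qed

lemma svd_coefficients_eigen:
  defines "W \<equiv> svd_coefficients S V \<sigma> r"
  shows "mat_adjoint S * S * (mat_adjoint B * B) * W = W * mat_diag r (\<lambda>k. complex_of_real ((\<sigma> k)^2))"
proof -
  define \<Sigma> where "\<Sigma> = mat_diag r (\<lambda>k. complex_of_real (\<sigma> k))"
  define \<Sigma>i where "\<Sigma>i = mat_diag r (\<lambda>k. complex_of_real (1 / \<sigma> k))"
  have Sc: "\<Sigma> \<in> carrier_mat r r" "\<Sigma>i \<in> carrier_mat r r" by (simp_all add: \<Sigma>_def \<Sigma>i_def)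
  have aS: "mat_adjoint S \<in> carrier_mat r n" and aU: "mat_adjoint U \<in> carrier_mat r N"
    and aB: "mat_adjoint B \<in> carrier_mat r N" using S U B by auto
  have Wc: "W \<in> carrier_mat r r" unfolding W_def by (rule svd_coefficients_carrier)
  have Wdef: "W = mat_adjoint S * V * \<Sigma>i" by (simp add: W_def \<Sigma>i_def svd_coefficients_def)
  have BW: "B * W = U" unfolding W_def by (rule svd_left_factor_eq[symmetric])
  have pos: "\<forall>k<r. 0 < \<sigma> k" using \<sigma>_pos by blast
  have SB: "S * mat_adjoint B = V * \<Sigma> * mat_adjoint U" unfolding \<Sigma>_def by (rule svd_adjoint_eq)
  have SS: "mat_adjoint S * S \<in> carrier_mat r r" and GG: "mat_adjoint B * B \<in> carrier_mat r r"
    and BWc: "B * W \<in> carrier_mat N r" and SaB: "S * mat_adjoint B \<in> carrier_mat n N"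
    using aS S aB B Wc by auto
  have VSc: "V * \<Sigma> \<in> carrier_mat n r" and VSU: "V * \<Sigma> * mat_adjoint U \<in> carrier_mat n N"
    and aUU: "mat_adjoint U * U \<in> carrier_mat r r" using V Sc aU U by auto
  have "mat_adjoint S * S * (mat_adjoint B * B) * W = (mat_adjoint S * S) * ((mat_adjoint B * B) * W)"
    using SS GG Wc by (rule assoc_mult_mat)
  also have "(mat_adjoint B * B) * W = mat_adjoint B * (B * W)" using aB B Wc by (rule assoc_mult_mat)
  also have "(mat_adjoint S * S) * (mat_adjoint B * (B * W)) = mat_adjoint S * (S * (mat_adjoint B * (B * W)))"
    using aS S by (rule assoc_mult_mat[of _ r n _ r _ r]) (use aB BWc in simp)
  also have "S * (mat_adjoint B * (B * W)) = (S * mat_adjoint B) * (B * W)"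
    using S aB BWc by (rule assoc_mult_mat[symmetric])
  also have "mat_adjoint S * ((S * mat_adjoint B) * (B * W)) = (mat_adjoint S * (S * mat_adjoint B)) * (B * W)"
    using aS SaB BWc by (rule assoc_mult_mat[symmetric])
  also have "\<dots> = mat_adjoint S * (V * \<Sigma> * mat_adjoint U) * U" unfolding SB BW ..
  also have "\<dots> = mat_adjoint S * (V * \<Sigma> * mat_adjoint U * U)"
    using aS by (rule assoc_mult_mat[of _ r n _ N _ r]) (use VSc VSU aUU aU U in simp_all)
  also have "V * \<Sigma> * mat_adjoint U * U = (V * \<Sigma>) * (mat_adjoint U * U)"
    by (rule assoc_mult_mat[of _ n r _ N _ r]) (use VSc VSU aUU aU U in simp_all)
  also have "mat_adjoint S * ((V * \<Sigma>) * (mat_adjoint U * U)) = (mat_adjoint S * (V * \<Sigma>)) * (mat_adjoint U * U)"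
    by (rule assoc_mult_mat[of _ r n _ r _ r, symmetric]) (use aS VSc aUU in simp_all)
  also have "mat_adjoint S * (V * \<Sigma>) = mat_adjoint S * V * \<Sigma>"
    by (rule assoc_mult_mat[of _ r n _ r _ r, symmetric]) (use aS V Sc in simp_all)
  also have "mat_adjoint S * V * \<Sigma> * (mat_adjoint U * U) = mat_adjoint S * V * \<Sigma>" unfolding UU using aS V Sc by simp
  also have "\<dots> = mat_adjoint S * V * (\<Sigma>i * (\<Sigma> * \<Sigma>))"
  proof -
    have "\<Sigma>i * (\<Sigma> * \<Sigma>) = \<Sigma>"
      unfolding \<Sigma>_def \<Sigma>i_def mat_diag_diag using pos by (intro eq_matI) (auto simp: mat_diag_def)
    then show ?thesis by simp
  qed
  also have "\<dots> = W * (\<Sigma> * \<Sigma>)" unfolding Wdef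
  proof (rule assoc_mult_mat[of _ r r _ r _ r, symmetric])
    show "mat_adjoint S * V \<in> carrier_mat r r" using aS V by simp
    show "\<Sigma>i \<in> carrier_mat r r" "\<Sigma> * \<Sigma> \<in> carrier_mat r r" using Sc by auto
  qed
  also have "\<Sigma> * \<Sigma> = mat_diag r (\<lambda>k. complex_of_real ((\<sigma> k)^2))"
    unfolding \<Sigma>_def mat_diag_diag by (simp add: power2_eq_square)
  finally show ?thesis .
qed

end

lemma quad_form_col_eq_index:
  fixes W G :: "complex mat"
  assumes W: "W \<in> carrier_mat r r" and G: "G \<in> carrier_mat r r" and k: "k < r"
  shows "(mat_adjoint W * G * W) $$ (k,k) = quad_form G (col W k)"
proof -
  have aW: "mat_adjoint W \<in> carrier_mat r r" using W by simp
  have "(mat_adjoint W * G * W) $$ (k,k) = (\<Sum>q<r. (mat_adjoint W * G) $$ (k,q) * W $$ (q,k))"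
    using W G aW k by (subst times_mat_index) auto
  also have "\<dots> = (\<Sum>q<r. (\<Sum>p<r. cnj (W $$ (p,k)) * G $$ (p,q)) * W $$ (q,k))"
    using W G aW k by (intro sum.cong refl) (subst times_mat_index, auto)
  also have "\<dots> = (\<Sum>p<r. \<Sum>q<r. cnj (W $$ (p,k)) * G $$ (p,q) * W $$ (q,k))"
    by (simp add: sum_distrib_right) (rule sum.swap)
  also have "\<dots> = quad_form G (col W k)"
    unfolding quad_form_def using W k by (intro sum.cong refl) auto
  finally show ?thesis .
qed

lemma norm_index_le_2_of_orthonormal:
  fixes W G :: "complex mat"
  assumes W: "W \<in> carrier_mat r r" and G: "G \<in> carrier_mat r r"
    and orth: "mat_adjoint W * G * W = 1\<^sub>m r" and dev: "gram_dev G \<le> 1/2" and ak: "a < r" "k < r"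
  shows "cmod (W $$ (a,k)) \<le> 2"
proof -
  have z: "col W k \<in> carrier_vec r" using W by (simp add: carrier_vecI)
  have "quad_form G (col W k) = 1" using quad_form_col_eq_index[OF W G ak(2)] orth ak by simp
  then have "(vnorm (col W k))^2 \<le> 2^2"
    using vnorm_power2_le_quad_form[OF G dev z] by simp
  then have "vnorm (col W k) \<le> 2" by (rule power2_le_imp_le) simp
  moreover have "cmod (W $$ (a,k)) \<le> vnorm (col W k)"
    using norm_index_le_vnorm[of a "col W k"] W ak by simp
  ultimately show ?thesis by linarith
qed

text \<open>Below G, H and W stand for B*B, S*S and the coefficients of U in the columns of B.\<close>

context
  fixes r :: nat and G H W :: "nat \<Rightarrow> complex mat" and \<sigma> :: "nat \<Rightarrow> nat \<Rightarrow> real" and \<theta> :: "nat \<Rightarrow> real"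
  assumes eventually_eqs: "\<forall>\<^sub>F n in sequentially.
      G n \<in> carrier_mat r r \<and> H n \<in> carrier_mat r r \<and> W n \<in> carrier_mat r r \<and>
      mat_adjoint (W n) * G n * W n = 1\<^sub>m r \<and>
      H n * G n * W n = W n * mat_diag r (\<lambda>k. complex_of_real ((\<sigma> n k)^2))"
    and G_lim: "\<And>a b. a < r \<Longrightarrow> b < r \<Longrightarrow> (\<lambda>n. G n $$ (a,b)) \<longlonglongrightarrow> (if a = b then 1 else 0)"
    and H_lim: "\<And>a b. a < r \<Longrightarrow> b < r \<Longrightarrow>
      (\<lambda>n. H n $$ (a,b)) \<longlonglongrightarrow> (if a = b then complex_of_real ((\<theta> a)^2) else 0)"
    and \<sigma>_lim: "\<And>k. k < r \<Longrightarrow> (\<lambda>n. \<sigma> n k) \<longlonglongrightarrow> \<theta> k"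
begin

lemma eventually_norm_coefficient_le_2:
  "\<forall>\<^sub>F n in sequentially. \<forall>a<r. \<forall>k<r. cmod (W n $$ (a,k)) \<le> 2"
proof -
  have "(\<lambda>n. gram_dev (G n)) \<longlonglongrightarrow> 0"
    using eventually_eqs by (intro gram_dev_tendsto_0 G_lim) (auto elim: eventually_mono)
  then have "\<forall>\<^sub>F n in sequentially. gram_dev (G n) < 1/2" by (rule order_tendstoD(2)) simp
  then have "\<forall>\<^sub>F n in sequentially. gram_dev (G n) \<le> 1/2" by (rule eventually_mono) simp
  with eventually_eqs show ?thesis
    by eventually_elim (auto intro: norm_index_le_2_of_orthonormal)
qed

lemma signal_gram_product_tendsto:
  assumes a: "a < r" and m: "m < r"
  shows "(\<lambda>n. (H n * G n) $$ (a,m)) \<longlonglongrightarrow> (if a = m then complex_of_real ((\<theta> a)^2) else 0)"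
proof -
  have "(\<lambda>n. (H n * G n) $$ (a,m))
      \<longlonglongrightarrow> (\<Sum>p<r. (if a = p then complex_of_real ((\<theta> a)^2) else 0) * (if p = m then 1 else 0))"
    using eventually_eqs a m by (intro times_mat_index_tendsto H_lim G_lim) (auto elim: eventually_mono)
  also have "(\<Sum>p<r. (if a = p then complex_of_real ((\<theta> a)^2) else 0) * (if p = m then 1 else 0))
      = (if a = m then complex_of_real ((\<theta> a)^2) else 0)"
    using a by (simp add: sum_delta_times_left)
  finally show ?thesis .
qed

text \<open>Entry (a,k) of H G W = W Sigma^2 gives
  W_ak (sigma_k^2 - theta_a^2) = sum_m ((HG)_am - delta_am theta_a^2) W_mk, which tends to 0 because
  HG tends to diag(theta^2) and W stays bounded; the factor sigma_k^2 - theta_a^2 does not.\<close>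

lemma coefficient_tendsto_0:
  assumes a: "a < r" and k: "k < r" and sep: "(\<theta> a)^2 \<noteq> (\<theta> k)^2"
  shows "(\<lambda>n. W n $$ (a,k)) \<longlonglongrightarrow> 0"
proof -
  let ?\<delta> = "\<lambda>m. if a = m then complex_of_real ((\<theta> a)^2) else 0"
  define R where "R n = (\<Sum>m<r. ((H n * G n) $$ (a,m) - ?\<delta> m) * W n $$ (m,k))" for n
  define d where "d n = complex_of_real ((\<sigma> n k)^2) - complex_of_real ((\<theta> a)^2)" for n
  note HG = signal_gram_product_tendsto[OF a]
  have "R \<longlonglongrightarrow> 0"
  proof -
    have "(\<lambda>n. \<Sum>m<r. W n $$ (m,k) * ((H n * G n) $$ (a,m) - ?\<delta> m)) \<longlonglongrightarrow> (\<Sum>m<r. 0)"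
    proof (intro tendsto_sum eventually_bounded_mult_tendsto_0)
      fix m assume "m \<in> {..<r}"
      then show "\<forall>\<^sub>F n in sequentially. cmod (W n $$ (m,k)) \<le> 2"
        using eventually_norm_coefficient_le_2 k by (auto elim: eventually_mono)
      from \<open>m \<in> {..<r}\<close> have "m < r" by simp
      from tendsto_diff[OF HG[OF this] tendsto_const[of "?\<delta> m"]]
      show "(\<lambda>n. (H n * G n) $$ (a,m) - ?\<delta> m) \<longlonglongrightarrow> 0" by simp
    qed
    then show ?thesis unfolding R_def by (simp add: mult.commute)
  qed
  moreover have d: "d \<longlonglongrightarrow> complex_of_real ((\<theta> k)^2) - complex_of_real ((\<theta> a)^2)"
    unfolding d_def using \<sigma>_lim[OF k] by (intro tendsto_intros)
  moreover have d_ne: "complex_of_real ((\<theta> k)^2) - complex_of_real ((\<theta> a)^2) \<noteq> 0"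
    using sep by (metis eq_iff_diff_eq_0 of_real_eq_iff)
  ultimately have "(\<lambda>n. R n / d n) \<longlonglongrightarrow> 0 / (complex_of_real ((\<theta> k)^2) - complex_of_real ((\<theta> a)^2))"
    by (rule tendsto_divide)
  then have "(\<lambda>n. R n / d n) \<longlonglongrightarrow> 0" by simp
  moreover have "\<forall>\<^sub>F n in sequentially. R n / d n = W n $$ (a,k)"
    using tendsto_imp_eventually_ne[OF d d_ne] eventually_eqs
  proof eventually_elim
    case (elim n)
    then have W: "W n \<in> carrier_mat r r" and HG: "H n * G n \<in> carrier_mat r r"
      and eig: "H n * G n * W n = W n * mat_diag r (\<lambda>k. complex_of_real ((\<sigma> n k)^2))" by auto
    have "(H n * G n * W n) $$ (a,k) = W n $$ (a,k) * complex_of_real ((\<sigma> n k)^2)"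
      unfolding eig using W a k by (simp add: mat_diag_mult_right)
    then have "(\<Sum>m<r. (H n * G n) $$ (a,m) * W n $$ (m,k)) = W n $$ (a,k) * complex_of_real ((\<sigma> n k)^2)"
      using W HG a k by (subst (asm) times_mat_index) auto
    moreover have "(\<Sum>m<r. ?\<delta> m * W n $$ (m,k)) = complex_of_real ((\<theta> a)^2) * W n $$ (a,k)"
      using a by (rule sum_delta_times_left)
    ultimately have "R n = W n $$ (a,k) * d n"
      unfolding R_def d_def by (simp add: sum_subtractf algebra_simps)
    then show ?case using elim by simp
  qed
  ultimately show ?thesis by (rule Lim_transform_eventually)
qed

text \<open>W* G W = 1 makes W invertible with (W W*) G = 1, so W W* - 1 = - (W W*)(G - 1) with
  W W* bounded.\<close>

lemma coefficient_mult_adjoint_tendsto: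
  assumes a: "a < r" and b: "b < r"
  shows "(\<lambda>n. (W n * mat_adjoint (W n)) $$ (a,b)) \<longlonglongrightarrow> (if a = b then 1 else 0)"
proof -
  define Y where "Y n = W n * mat_adjoint (W n)" for n
  let ?E = "\<lambda>n m. G n $$ (m,b) - (if m = b then 1 else 0)"
  have Y_bounded: "\<forall>\<^sub>F n in sequentially. cmod (Y n $$ (a,m)) \<le> 4 * real r" if m: "m < r" for m
    using eventually_eqs eventually_norm_coefficient_le_2
  proof eventually_elim
    case (elim n)
    then have W: "W n \<in> carrier_mat r r" by auto
    have "Y n $$ (a,m) = (\<Sum>k<r. W n $$ (a,k) * cnj (W n $$ (m,k)))"
      unfolding Y_def using W a m by (subst times_mat_index) auto
    then have "cmod (Y n $$ (a,m)) \<le> (\<Sum>k<r. cmod (W n $$ (a,k)) * cmod (W n $$ (m,k)))"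
      by (simp add: order_trans[OF norm_sum] norm_mult)
    also have "\<dots> \<le> (\<Sum>k<r. 2 * 2)"
      using elim a m by (intro sum_mono mult_mono) auto
    finally show ?case by simp
  qed
  have "(\<lambda>n. (if a = b then 1 else 0) - (\<Sum>m<r. Y n $$ (a,m) * ?E n m)) \<longlonglongrightarrow> (if a = b then 1 else 0) - (\<Sum>m<r. 0)"
  proof (intro tendsto_diff tendsto_const tendsto_sum eventually_bounded_mult_tendsto_0)
    fix m assume m: "m \<in> {..<r}"
    then show "\<forall>\<^sub>F n in sequentially. cmod (Y n $$ (a,m)) \<le> 4 * real r" using Y_bounded by simp
    from m b have "(\<lambda>n. G n $$ (m,b)) \<longlonglongrightarrow> (if m = b then 1 else 0)" by (intro G_lim) auto
    from tendsto_diff[OF this tendsto_const[of "if m = b then 1 else 0"]]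
    show "(\<lambda>n. ?E n m) \<longlonglongrightarrow> 0" by simp
  qed
  moreover have "\<forall>\<^sub>F n in sequentially. (if a = b then 1 else 0) - (\<Sum>m<r. Y n $$ (a,m) * ?E n m) = Y n $$ (a,b)"
    using eventually_eqs
  proof eventually_elim
    case (elim n)
    then have W: "W n \<in> carrier_mat r r" and G: "G n \<in> carrier_mat r r"
      and orth: "mat_adjoint (W n) * G n * W n = 1\<^sub>m r" by auto
    have Y: "Y n \<in> carrier_mat r r" unfolding Y_def using W by simp
    have "W n * (mat_adjoint (W n) * G n) = 1\<^sub>m r"
      using mat_mult_left_right_inverse[OF mult_carrier_mat[OF carrier_mat_adjoint[OF W] G] W orth] .
    then have "Y n * G n = 1\<^sub>m r"
      unfolding Y_def using W G by (simp add: assoc_mult_mat[of _ r r _ r _ r])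
    then have "(Y n * G n) $$ (a,b) = (if a = b then 1 else 0)" using a b by simp
    then have "(\<Sum>m<r. Y n $$ (a,m) * G n $$ (m,b)) = (if a = b then 1 else 0)"
      using Y G a b by (subst (asm) times_mat_index) auto
    moreover have "(\<Sum>m<r. Y n $$ (a,m) * (if m = b then 1 else 0)) = Y n $$ (a,b)"
      using b by (rule sum_times_delta_right)
    ultimately show ?case by (simp add: algebra_simps sum_subtractf)
  qed
  ultimately show ?thesis unfolding Y_def by (simp add: Lim_transform_eventually)
qed

lemma coefficient_cross_term_tendsto_0:
  assumes "a < r" "b < r" "k < r" "(\<theta> a)^2 \<noteq> (\<theta> k)^2"
  shows "(\<lambda>n. W n $$ (a,k) * cnj (W n $$ (b,k))) \<longlonglongrightarrow> 0"
proof -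
  have "(\<lambda>n. cnj (W n $$ (b,k)) * W n $$ (a,k)) \<longlonglongrightarrow> 0"
  proof (rule eventually_bounded_mult_tendsto_0)
    show "\<forall>\<^sub>F n in sequentially. cmod (cnj (W n $$ (b,k))) \<le> 2"
      by (rule eventually_mono[OF eventually_norm_coefficient_le_2]) (use assms in simp)
    show "(\<lambda>n. W n $$ (a,k)) \<longlonglongrightarrow> 0"
      using assms by (intro coefficient_tendsto_0)
  qed
  then show ?thesis by (simp add: mult.commute)
qed

lemma block_coefficient_sum_tendsto:
  assumes K: "K \<subseteq> {..<r}"
    and sep: "\<And>a k. a < r \<Longrightarrow> k < r \<Longrightarrow> (a \<in> K) \<noteq> (k \<in> K) \<Longrightarrow> (\<theta> a)^2 \<noteq> (\<theta> k)^2"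
    and p: "p < r" and q: "q < r"
  shows "(\<lambda>n. \<Sum>k\<in>K. W n $$ (p,k) * cnj (W n $$ (q,k))) \<longlonglongrightarrow> (if p = q \<and> p \<in> K then 1 else 0)"
proof -
  have cross: "(\<lambda>n. W n $$ (a,k) * cnj (W n $$ (b,k))) \<longlonglongrightarrow> 0"
    if "a < r" "b < r" "k < r" "(a \<in> K) \<noteq> (k \<in> K)" for a b k
    using that by (intro coefficient_cross_term_tendsto_0 sep)
  have cross_sum: "(\<lambda>n. \<Sum>k\<in>L. W n $$ (a,k) * cnj (W n $$ (b,k))) \<longlonglongrightarrow> 0"
    if "L \<subseteq> {..<r}" "a < r" "b < r" "\<And>k. k \<in> L \<Longrightarrow> (a \<in> K) \<noteq> (k \<in> K)" for L a b
  proof -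
    have "(\<lambda>n. \<Sum>k\<in>L. W n $$ (a,k) * cnj (W n $$ (b,k))) \<longlonglongrightarrow> (\<Sum>k\<in>L. 0)"
      using that by (intro tendsto_sum cross) auto
    then show ?thesis by simp
  qed
  have outside: "(\<lambda>n. \<Sum>k\<in>K. W n $$ (a,k) * cnj (W n $$ (b,k))) \<longlonglongrightarrow> 0"
    if "a < r" "b < r" "a \<notin> K" for a b
    using K that by (intro cross_sum) auto
  consider "p \<notin> K" | "q \<notin> K" | "p \<in> K" "q \<in> K" by blast
  then show ?thesis
  proof cases
    case 1
    then show ?thesis using outside[OF p q] by simp
  next
    case 2
    have "(\<lambda>n. cnj (\<Sum>k\<in>K. W n $$ (q,k) * cnj (W n $$ (p,k)))) \<longlonglongrightarrow> cnj 0"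
      using outside[OF q p 2] by (rule tendsto_cnj)
    moreover have "(if p = q \<and> p \<in> K then 1 else 0) = (0 :: complex)" using 2 by auto
    ultimately show ?thesis by (simp only:) (simp add: cnj_sum mult.commute)
  next
    case 3
    have rest: "(\<lambda>n. \<Sum>k\<in>{..<r} - K. W n $$ (p,k) * cnj (W n $$ (q,k))) \<longlonglongrightarrow> 0"
      using p q 3 by (intro cross_sum) auto
    have "(\<lambda>n. (W n * mat_adjoint (W n)) $$ (p,q) - (\<Sum>k\<in>{..<r} - K. W n $$ (p,k) * cnj (W n $$ (q,k))))
        \<longlonglongrightarrow> (if p = q then 1 else 0) - 0"
      by (intro tendsto_diff coefficient_mult_adjoint_tendsto p q rest)
    moreover have "\<forall>\<^sub>F n in sequentially.
        (W n * mat_adjoint (W n)) $$ (p,q) - (\<Sum>k\<in>{..<r} - K. W n $$ (p,k) * cnj (W n $$ (q,k)))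
        = (\<Sum>k\<in>K. W n $$ (p,k) * cnj (W n $$ (q,k)))"
      using eventually_eqs
    proof eventually_elim
      case (elim n)
      then have "(W n * mat_adjoint (W n)) $$ (p,q) = (\<Sum>k<r. W n $$ (p,k) * cnj (W n $$ (q,k)))"
        using p q by (subst times_mat_index) auto
      also have "\<dots> = (\<Sum>k\<in>K. W n $$ (p,k) * cnj (W n $$ (q,k))) + (\<Sum>k\<in>{..<r} - K. W n $$ (p,k) * cnj (W n $$ (q,k)))"
        using sum.subset_diff[OF K] by (simp add: add.commute)
      finally show ?case by simp
    qed
    ultimately show ?thesis using 3 by (simp add: Lim_transform_eventually)
  qed
qed

end

section \<open>Singular subspaces\<close>

lemma blk_start_Suc: "blk_start j (Suc i) = blk_start j i + j i"
  by (simp add: blk_start_def)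

lemma blk_start_mono: "i \<le> i' \<Longrightarrow> blk_start j i \<le> blk_start j i'"
  unfolding blk_start_def by (intro sum_mono2) auto

lemma in_some_block: "k < blk_start j s \<Longrightarrow> \<exists>i<s. k \<in> {blk_start j i..<blk_start j (Suc i)}"
proof (induction s)
  case (Suc s)
  then show ?case
    by (cases "k < blk_start j s") (auto intro: less_SucI)
qed (simp add: blk_start_def)

lemma in_unique_block:
  assumes "k \<in> {blk_start j i..<blk_start j (Suc i)}" "k \<in> {blk_start j i'..<blk_start j (Suc i')}"
  shows "i = i'"
proof (rule ccontr)
  assume "i \<noteq> i'"
  then consider "Suc i \<le> i'" | "Suc i' \<le> i" by linarith
  then show False
    by cases (use blk_start_mono[of _ _ j] assms in \<open>fastforce+\<close>)
qed

lemma Odiag_eq: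
  assumes "i < s" "k \<in> {blk_start j i..<blk_start j (Suc i)}"
  shows "Odiag s j \<omega> k = \<omega> i"
  unfolding Odiag_def by (rule arg_cong[where f = \<omega>], rule the_equality) (use assms in_unique_block in auto)

lemma Odiag_power2_ne:
  assumes \<omega>_pos: "\<And>i. i < s \<Longrightarrow> 0 < \<omega> i"
    and \<omega>_decr: "\<And>i i'. i < i' \<Longrightarrow> i' < s \<Longrightarrow> \<omega> i' < \<omega> i"
    and i: "i < s" and a: "a \<in> {blk_start j i..<blk_start j (Suc i)}"
    and k: "k < blk_start j s" "k \<notin> {blk_start j i..<blk_start j (Suc i)}"
  shows "(Odiag s j \<omega> a)^2 \<noteq> (Odiag s j \<omega> k)^2"
proof -
  obtain i' where i': "i' < s" "k \<in> {blk_start j i'..<blk_start j (Suc i')}"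
    using in_some_block[OF k(1)] by blast
  have "i' \<noteq> i" using i' k(2) by auto
  then have "\<omega> i \<noteq> \<omega> i'" using \<omega>_decr i i' by (metis less_irrefl nat_neq_iff)
  moreover have "0 < \<omega> i" "0 < \<omega> i'" using \<omega>_pos i i' by auto
  ultimately show ?thesis
    using Odiag_eq[OF i a] Odiag_eq[OF i'] power2_eq_iff_nonneg by fastforce
qed

definition coefficient_block_gram :: "complex mat \<Rightarrow> nat \<Rightarrow> (nat \<Rightarrow> nat) \<Rightarrow> nat \<Rightarrow> complex mat" where
  "coefficient_block_gram W r j i = mat r r (\<lambda>(p,q). \<Sum>k\<in>{blk_start j i..<blk_start j (Suc i)}. W $$ (p,k) * cnj (W $$ (q,k)))"

definition block_indicator_mat :: "nat \<Rightarrow> (nat \<Rightarrow> nat) \<Rightarrow> nat \<Rightarrow> complex mat" where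
  "block_indicator_mat r j i = mat r r (\<lambda>(p,q). if p = q \<and> p \<in> {blk_start j i..<blk_start j (Suc i)} then 1 else 0)"

lemma Pi_blk_times_eq:
  fixes B W :: "complex mat"
  assumes B: "B \<in> carrier_mat N r" and W: "W \<in> carrier_mat r r" and le: "blk_start j (Suc i) \<le> r"
  shows "Pi_blk (B * W) j i = B * coefficient_block_gram W r j i * mat_adjoint B"
proof (rule eq_matI)
  let ?K = "{blk_start j i..<blk_start j (Suc i)}"
  have M: "coefficient_block_gram W r j i \<in> carrier_mat r r" by (simp add: coefficient_block_gram_def)
  fix a b assume "a < dim_row (B * coefficient_block_gram W r j i * mat_adjoint B)"
    "b < dim_col (B * coefficient_block_gram W r j i * mat_adjoint B)"
  then have a: "a < N" and b: "b < N" using B by auto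
  have BW: "(B * W) $$ (x,k) = (\<Sum>p<r. B $$ (x,p) * W $$ (p,k))" if "x < N" "k < r" for x k
    using B W that by (subst times_mat_index) auto
  have "Pi_blk (B * W) j i $$ (a,b) = (\<Sum>k\<in>?K. (B * W) $$ (a,k) * cnj ((B * W) $$ (b,k)))"
    using B W a b by (simp add: Pi_blk_def)
  also have "\<dots> = (\<Sum>k\<in>?K. (\<Sum>p<r. B $$ (a,p) * W $$ (p,k)) * cnj (\<Sum>q<r. B $$ (b,q) * W $$ (q,k)))"
    using a b le by (intro sum.cong refl) (simp add: BW)
  also have "\<dots> = (\<Sum>k\<in>?K. \<Sum>q<r. \<Sum>p<r. B $$ (a,p) * (W $$ (p,k) * cnj (W $$ (q,k))) * cnj (B $$ (b,q)))"
    by (simp add: sum_distrib_left sum_distrib_right cnj_sum algebra_simps)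
  also have "\<dots> = (\<Sum>p<r. \<Sum>q<r. \<Sum>k\<in>?K. B $$ (a,p) * (W $$ (p,k) * cnj (W $$ (q,k))) * cnj (B $$ (b,q)))"
    by (subst sum.swap, subst (2) sum.swap, intro sum.cong refl sum.swap)
  also have "\<dots> = (\<Sum>p<r. \<Sum>q<r. B $$ (a,p) * coefficient_block_gram W r j i $$ (p,q) * cnj (B $$ (b,q)))"
    by (intro sum.cong refl) (simp add: coefficient_block_gram_def sum_distrib_left sum_distrib_right)
  also have "\<dots> = (B * coefficient_block_gram W r j i * mat_adjoint B) $$ (a,b)"
    by (rule sandwich_index[OF B M a b, symmetric])
  finally show "Pi_blk (B * W) j i $$ (a,b) = (B * coefficient_block_gram W r j i * mat_adjoint B) $$ (a,b)" .
qed (use B in \<open>auto simp: Pi_blk_def\<close>)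

lemma col_block_mult_adjoint_eq:
  fixes B :: "complex mat"
  assumes B: "B \<in> carrier_mat N r" and le: "blk_start j (Suc i) \<le> r"
  shows "col_block B j i * mat_adjoint (col_block B j i) = B * block_indicator_mat r j i * mat_adjoint B"
proof (rule eq_matI)
  let ?K = "{blk_start j i..<blk_start j (Suc i)}"
  have E: "block_indicator_mat r j i \<in> carrier_mat r r" by (simp add: block_indicator_mat_def)
  have Bi: "col_block B j i \<in> carrier_mat N (j i)" using B by (simp add: col_block_def)
  fix a b assume "a < dim_row (B * block_indicator_mat r j i * mat_adjoint B)"
    "b < dim_col (B * block_indicator_mat r j i * mat_adjoint B)"
  then have a: "a < N" and b: "b < N" using B by auto
  have K: "?K = (\<lambda>l. blk_start j i + l) ` {..<j i}"
  proof
    show "?K \<subseteq> (\<lambda>l. blk_start j i + l) ` {..<j i}"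
    proof
      fix x assume "x \<in> ?K"
      then have "x = blk_start j i + (x - blk_start j i)" "x - blk_start j i \<in> {..<j i}"
        by (auto simp: blk_start_Suc)
      then show "x \<in> (\<lambda>l. blk_start j i + l) ` {..<j i}" by blast
    qed
  qed (auto simp: blk_start_Suc)
  have "(col_block B j i * mat_adjoint (col_block B j i)) $$ (a,b)
      = (\<Sum>l<j i. B $$ (a, blk_start j i + l) * cnj (B $$ (b, blk_start j i + l)))"
    using Bi a b B by (subst times_mat_index) (auto simp: col_block_def)
  also have "\<dots> = (\<Sum>k\<in>?K. B $$ (a,k) * cnj (B $$ (b,k)))"
    by (simp add: K sum.reindex)
  also have "\<dots> = (\<Sum>p<r. if p \<in> ?K then B $$ (a,p) * cnj (B $$ (b,p)) else 0)"
  proof -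
    have "(\<Sum>p<r. if p \<in> ?K then B $$ (a,p) * cnj (B $$ (b,p)) else 0)
        = (\<Sum>p\<in>{..<r} \<inter> ?K. B $$ (a,p) * cnj (B $$ (b,p)))"
      by (rule sum.inter_restrict[symmetric]) simp
    also have "{..<r} \<inter> ?K = ?K" using le by auto
    finally show ?thesis by (rule sym)
  qed
  also have "\<dots> = (\<Sum>p<r. \<Sum>q<r. B $$ (a,p) * block_indicator_mat r j i $$ (p,q) * cnj (B $$ (b,q)))"
    by (intro sum.cong refl) (simp add: block_indicator_mat_def if_distrib if_distribR sum.If_cases cong: if_cong)
  also have "\<dots> = (B * block_indicator_mat r j i * mat_adjoint B) $$ (a,b)"
    by (rule sandwich_index[OF B E a b, symmetric])
  finally show "(col_block B j i * mat_adjoint (col_block B j i)) $$ (a,b) = (B * block_indicator_mat r j i * mat_adjoint B) $$ (a,b)" .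
qed (use B in \<open>auto simp: col_block_def\<close>)

lemma Pi_blk_minus_col_block_gram:
  fixes B W :: "complex mat"
  assumes B: "B \<in> carrier_mat N r" and W: "W \<in> carrier_mat r r" and le: "blk_start j (Suc i) \<le> r"
  shows "Pi_blk (B * W) j i - col_block B j i * mat_adjoint (col_block B j i)
    = B * (coefficient_block_gram W r j i - block_indicator_mat r j i) * mat_adjoint B"
proof -
  have M: "coefficient_block_gram W r j i \<in> carrier_mat r r" by (simp add: coefficient_block_gram_def)
  have E: "block_indicator_mat r j i \<in> carrier_mat r r" by (simp add: block_indicator_mat_def)
  have "B * (coefficient_block_gram W r j i - block_indicator_mat r j i) * mat_adjoint B
      = (B * coefficient_block_gram W r j i - B * block_indicator_mat r j i) * mat_adjoint B"
    by (simp add: mult_minus_distrib_mat[OF B M E])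
  also have "\<dots> = B * coefficient_block_gram W r j i * mat_adjoint B - B * block_indicator_mat r j i * mat_adjoint B"
    using B M E by (intro minus_mult_distrib_mat mult_carrier_mat carrier_mat_adjoint)
  finally show ?thesis by (simp add: Pi_blk_times_eq[OF B W le] col_block_mult_adjoint_eq[OF B le])
qed

lemma spec_norm_Pi_blk_minus_proj_colspace_le:
  fixes B W :: "complex mat"
  assumes B: "B \<in> carrier_mat N r" "flat_mat B" and N: "0 < N" and W: "W \<in> carrier_mat r r"
    and le: "blk_start j (Suc i) \<le> r"
    and dev: "gram_dev (mat_adjoint (col_block B j i) * col_block B j i) \<le> 1/2"
  defines "X \<equiv> coefficient_block_gram W r j i - block_indicator_mat r j i"
  shows "\<bar>spec_norm (Pi_blk (B * W) j i - proj_colspace (col_block B j i))\<bar>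
    \<le> (\<Sum>p<r. \<Sum>q<r. cmod (X $$ (p,q))) + 2 * gram_dev (mat_adjoint (col_block B j i) * col_block B j i)"
proof -
  let ?Bi = "col_block B j i"
  let ?d = "gram_dev (mat_adjoint ?Bi * ?Bi)"
  let ?\<xi> = "\<Sum>p<r. \<Sum>q<r. cmod (X $$ (p,q))"
  let ?\<Pi> = "Pi_blk (B * W) j i"
  let ?P = "proj_colspace ?Bi"
  let ?Q = "?Bi * mat_adjoint ?Bi"
  have Bi: "?Bi \<in> carrier_mat N (j i)" using B by (simp add: col_block_def)
  have flat: "flat_mat ?Bi" using B le by (intro flat_mat_col_block) (simp_all add: blk_start_Suc)
  have P: "?P \<in> carrier_mat N N" using is_orth_proj_proj_colspace[OF Bi dev] by (simp add: is_orth_proj_def)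
  have Pi: "?\<Pi> \<in> carrier_mat N N" using B W by (simp add: Pi_blk_def)
  have Q: "?Q \<in> carrier_mat N N" using mult_carrier_mat[OF Bi carrier_mat_adjoint[OF Bi]] .
  have X: "X \<in> carrier_mat r r"
    unfolding X_def by (intro carrier_matI) (simp_all add: coefficient_block_gram_def block_indicator_mat_def)
  have "vnorm ((?\<Pi> - ?P) *\<^sub>v x) \<le> (?\<xi> + 2 * ?d) * vnorm x" if x: "x \<in> carrier_vec N" for x
  proof -
    have "(?\<Pi> - ?P) *\<^sub>v x = (?\<Pi> - ?Q) *\<^sub>v x + (?Q *\<^sub>v x - ?P *\<^sub>v x)"
      using Pi P Q x by (intro eq_vecI) (auto simp: minus_mult_distrib_mat_vec)
    then have "vnorm ((?\<Pi> - ?P) *\<^sub>v x) \<le> vnorm ((?\<Pi> - ?Q) *\<^sub>v x) + vnorm (?Q *\<^sub>v x - ?P *\<^sub>v x)"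
      using carrier_matD[OF Pi] carrier_matD[OF P] carrier_matD[OF Q] by (simp add: vnorm_add_le)
    also have "vnorm (?Q *\<^sub>v x - ?P *\<^sub>v x) = vnorm ((?P - ?Q) *\<^sub>v x)"
      using P Q x carrier_matD[OF P] carrier_matD[OF Q]
      by (simp add: minus_mult_distrib_mat_vec vnorm_minus_commute[of "?Q *\<^sub>v x"])
    also have "vnorm ((?\<Pi> - ?Q) *\<^sub>v x) \<le> ?\<xi> * vnorm x"
      unfolding Pi_blk_minus_col_block_gram[OF B(1) W le] X_def[symmetric]
      by (rule vnorm_flat_sandwich_mult_le[OF B(2,1) X x])
    also have "vnorm ((?P - ?Q) *\<^sub>v x) \<le> 2 * ?d * vnorm x"
      by (rule vnorm_proj_colspace_minus_gram_le[OF Bi flat dev x])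
    finally show ?thesis by (simp add: algebra_simps)
  qed
  then show ?thesis using Pi P N by (intro spec_norm_le) auto
qed

lemma col_block_gram_index:
  fixes B :: "complex mat"
  assumes B: "B \<in> carrier_mat N r" and le: "blk_start j i + j i \<le> r" and pq: "p < j i" "q < j i"
  shows "(mat_adjoint (col_block B j i) * col_block B j i) $$ (p,q)
    = (mat_adjoint B * B) $$ (blk_start j i + p, blk_start j i + q)"
proof -
  have "(mat_adjoint (col_block B j i) * col_block B j i) $$ (p,q)
      = (\<Sum>l<N. cnj (B $$ (l, blk_start j i + p)) * B $$ (l, blk_start j i + q))"
    using B pq by (subst adjoint_times_mat_index) (auto simp: col_block_def)
  also have "\<dots> = (mat_adjoint B * B) $$ (blk_start j i + p, blk_start j i + q)"
    using B pq le by (subst adjoint_times_mat_index) auto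
  finally show ?thesis .
qed

lemma tendsto_0_of_sqrt_rate:
  assumes "\<forall>\<^sub>F n in sequentially. cmod (complex_of_real (sqrt (real n)) * x n) \<le> K"
  shows "x \<longlonglongrightarrow> 0"
proof (rule Lim_null_comparison)
  show "(\<lambda>n. K / sqrt (real n)) \<longlonglongrightarrow> 0"
    by (intro tendsto_divide_0[OF tendsto_const] filterlim_at_top_imp_at_infinity
        filterlim_compose[OF sqrt_at_top filterlim_real_sequentially])
  show "\<forall>\<^sub>F n in sequentially. norm (x n) \<le> K / sqrt (real n)"
    using assms eventually_gt_at_top[of 0]
    by eventually_elim (simp add: norm_mult field_simps)
qed

context
  fixes N :: "nat \<Rightarrow> nat" and c D :: real and r s :: nat
    and phi :: "nat \<Rightarrow> real" and S :: "nat \<Rightarrow> complex mat"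
    and j :: "nat \<Rightarrow> nat" and \<omega> :: "nat \<Rightarrow> real"
    and U V :: "nat \<Rightarrow> complex mat" and \<sigma> :: "nat \<Rightarrow> nat \<Rightarrow> real"
  assumes N_le: "\<And>n. N n \<le> n"
    and N_lim: "(\<lambda>n. real (N n) / real n) \<longlonglongrightarrow> c"
    and c_pos: "0 < c" and D_pos: "0 < D"
    and phi_range: "\<And>k. k < r \<Longrightarrow> 0 \<le> phi k \<and> phi k \<le> pi / D"
    and phi_distinct: "inj_on phi {..<r}"
    and S_carrier: "\<And>n. S n \<in> carrier_mat n r"
    and S_bound: "\<exists>K. \<forall>\<^sub>F n in sequentially. \<forall>a<r. \<forall>b<r.
        cmod (complex_of_real (sqrt (real n)) *
              (mat_adjoint (S n) * S n - Omat r s j \<omega> * Omat r s j \<omega>) $$ (a, b)) \<le> K"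
    and \<omega>_pos: "\<And>i. i < s \<Longrightarrow> 0 < \<omega> i"
    and \<omega>_decr: "\<And>i i'. i < i' \<Longrightarrow> i' < s \<Longrightarrow> \<omega> i' < \<omega> i"
    and j_sum: "(\<Sum>i<s. j i) = r"
    and svd: "\<forall>\<^sub>F n in sequentially.
        U n \<in> carrier_mat (N n) r \<and> V n \<in> carrier_mat n r \<and>
        mat_adjoint (U n) * U n = 1\<^sub>m r \<and> mat_adjoint (V n) * V n = 1\<^sub>m r \<and>
        (\<forall>k k'. k \<le> k' \<longrightarrow> k' < r \<longrightarrow> \<sigma> n k' \<le> \<sigma> n k) \<and>
        (\<forall>k<r. 0 < \<sigma> n k) \<and>
        Bmat (N n) D r phi * mat_adjoint (S n) =
          U n * mat_diag r (\<lambda>k. complex_of_real (\<sigma> n k)) * mat_adjoint (V n)"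
    and \<sigma>_lim: "\<And>k. k < r \<Longrightarrow> (\<lambda>n. \<sigma> n k) \<longlonglongrightarrow> Odiag s j \<omega> k"
begin

lemma signal_gram_tendsto:
  assumes "a < r" "b < r"
  shows "(\<lambda>n. (mat_adjoint (S n) * S n) $$ (a,b)) \<longlonglongrightarrow> (if a = b then complex_of_real ((Odiag s j \<omega> a)^2) else 0)"
proof -
  let ?O2 = "Omat r s j \<omega> * Omat r s j \<omega>"
  have O2: "?O2 \<in> carrier_mat r r" by (simp add: Omat_def)
  obtain K where K: "\<forall>\<^sub>F n in sequentially. \<forall>a<r. \<forall>b<r.
      cmod (complex_of_real (sqrt (real n)) * (mat_adjoint (S n) * S n - ?O2) $$ (a, b)) \<le> K"
    using S_bound by blast
  have diff: "(mat_adjoint (S n) * S n - ?O2) $$ (a,b) = (mat_adjoint (S n) * S n) $$ (a,b) - ?O2 $$ (a,b)" for n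
    using O2 assms by (intro index_minus_mat(1)) auto
  have "(\<lambda>n. (mat_adjoint (S n) * S n) $$ (a,b) - ?O2 $$ (a,b)) \<longlonglongrightarrow> 0"
    by (rule tendsto_0_of_sqrt_rate[of _ K], rule eventually_mono[OF K]) (metis assms diff)
  moreover have "?O2 $$ (a,b) = (if a = b then complex_of_real ((Odiag s j \<omega> a)^2) else 0)"
    using assms unfolding Omat_def mat_diag_diag by (simp add: mat_diag_def power2_eq_square)
  ultimately show ?thesis using tendsto_add[OF _ tendsto_const[of "?O2 $$ (a,b)"]] by fastforce
qed

lemma eventually_svd_coefficient_eqs:
  "\<forall>\<^sub>F n in sequentially.
     U n = Bmat (N n) D r phi * svd_coefficients (S n) (V n) (\<sigma> n) r \<and>
     mat_adjoint (Bmat (N n) D r phi) * Bmat (N n) D r phi \<in> carrier_mat r r \<and>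
     mat_adjoint (S n) * S n \<in> carrier_mat r r \<and>
     svd_coefficients (S n) (V n) (\<sigma> n) r \<in> carrier_mat r r \<and>
     mat_adjoint (svd_coefficients (S n) (V n) (\<sigma> n) r) * (mat_adjoint (Bmat (N n) D r phi) * Bmat (N n) D r phi)
       * svd_coefficients (S n) (V n) (\<sigma> n) r = 1\<^sub>m r \<and>
     mat_adjoint (S n) * S n * (mat_adjoint (Bmat (N n) D r phi) * Bmat (N n) D r phi)
       * svd_coefficients (S n) (V n) (\<sigma> n) r
       = svd_coefficients (S n) (V n) (\<sigma> n) r * mat_diag r (\<lambda>k. complex_of_real ((\<sigma> n k)^2))"
  using svd
proof eventually_elim
  case (elim n)
  have B: "Bmat (N n) D r phi \<in> carrier_mat (N n) r" by (intro carrier_matI) simp_all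
  note facts = B S_carrier[of n] conjunct1[OF elim] conjunct1[OF conjunct2[OF elim]]
  from elim have "mat_adjoint (U n) * U n = 1\<^sub>m r" "mat_adjoint (V n) * V n = 1\<^sub>m r"
    "\<And>k. k < r \<Longrightarrow> 0 < \<sigma> n k"
    "Bmat (N n) D r phi * mat_adjoint (S n) = U n * mat_diag r (\<lambda>k. complex_of_real (\<sigma> n k)) * mat_adjoint (V n)"
    by auto
  note svd_facts = facts this
  show ?case
    using svd_left_factor_eq[OF svd_facts] svd_coefficients_carrier[OF svd_facts]
      svd_coefficients_orthonormal[OF svd_facts] svd_coefficients_eigen[OF svd_facts]
      mult_carrier_mat[OF carrier_mat_adjoint[OF B] B]
      mult_carrier_mat[OF carrier_mat_adjoint[OF S_carrier[of n]] S_carrier[of n]]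
    by simp
qed

lemma blk_start_Suc_le: "i < s \<Longrightarrow> blk_start j (Suc i) \<le> r"
  using blk_start_mono[of "Suc i" s j] j_sum by (simp add: blk_start_def)

lemma block_separated:
  assumes i: "i < s" and a: "a < r" and k: "k < r"
    and "(a \<in> {blk_start j i..<blk_start j (Suc i)}) \<noteq> (k \<in> {blk_start j i..<blk_start j (Suc i)})"
  shows "(Odiag s j \<omega> a)^2 \<noteq> (Odiag s j \<omega> k)^2"
proof -
  have r: "blk_start j s = r" using j_sum by (simp add: blk_start_def)
  from assms(4) consider "a \<in> {blk_start j i..<blk_start j (Suc i)}" "k \<notin> {blk_start j i..<blk_start j (Suc i)}"
    | "k \<in> {blk_start j i..<blk_start j (Suc i)}" "a \<notin> {blk_start j i..<blk_start j (Suc i)}"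
    by blast
  then show ?thesis
  proof cases
    case 1
    from Odiag_power2_ne[OF \<omega>_pos \<omega>_decr i 1(1) k[folded r] 1(2)] show ?thesis .
  next
    case 2
    from Odiag_power2_ne[OF \<omega>_pos \<omega>_decr i 2(1) a[folded r] 2(2)] show ?thesis by (rule not_sym)
  qed
qed

lemma coefficient_block_deviation_tendsto_0:
  assumes i: "i < s"
  shows "(\<lambda>n. \<Sum>p<r. \<Sum>q<r. cmod ((coefficient_block_gram (svd_coefficients (S n) (V n) (\<sigma> n) r) r j i
      - block_indicator_mat r j i) $$ (p,q))) \<longlonglongrightarrow> 0"
proof -
  define W where "W n = svd_coefficients (S n) (V n) (\<sigma> n) r" for n
  let ?K = "{blk_start j i..<blk_start j (Suc i)}"
  have "\<forall>\<^sub>F n in sequentially. mat_adjoint (Bmat (N n) D r phi) * Bmat (N n) D r phi \<in> carrier_mat r r \<and>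
      mat_adjoint (S n) * S n \<in> carrier_mat r r \<and> W n \<in> carrier_mat r r \<and>
      mat_adjoint (W n) * (mat_adjoint (Bmat (N n) D r phi) * Bmat (N n) D r phi) * W n = 1\<^sub>m r \<and>
      mat_adjoint (S n) * S n * (mat_adjoint (Bmat (N n) D r phi) * Bmat (N n) D r phi) * W n
        = W n * mat_diag r (\<lambda>k. complex_of_real ((\<sigma> n k)^2))"
    using eventually_svd_coefficient_eqs[folded W_def] by (rule eventually_mono) blast
  note coefficients = block_coefficient_sum_tendsto[OF this
      steering_gram_tendsto[OF N_le N_lim c_pos D_pos phi_range phi_distinct] signal_gram_tendsto \<sigma>_lim]
  have "(\<lambda>n. (coefficient_block_gram (W n) r j i - block_indicator_mat r j i) $$ (p,q)) \<longlonglongrightarrow> 0"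
    if "p < r" "q < r" for p q
  proof -
    have "(\<lambda>n. \<Sum>k\<in>?K. W n $$ (p,k) * cnj (W n $$ (q,k))) \<longlonglongrightarrow> (if p = q \<and> p \<in> ?K then 1 else 0)"
      using blk_start_Suc_le[OF i] that by (intro coefficients block_separated[OF i]) auto
    from tendsto_diff[OF this tendsto_const[of "if p = q \<and> p \<in> ?K then 1 else 0"]]
    show ?thesis using that by (simp add: coefficient_block_gram_def block_indicator_mat_def)
  qed
  then have "(\<lambda>n. \<Sum>p<r. \<Sum>q<r. cmod ((coefficient_block_gram (W n) r j i - block_indicator_mat r j i) $$ (p,q)))
      \<longlonglongrightarrow> (\<Sum>p<r. \<Sum>q<r. 0)"
    by (intro tendsto_sum tendsto_norm_zero) auto
  then show ?thesis by (simp add: W_def)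
qed

lemma col_block_gram_dev_tendsto_0:
  assumes i: "i < s"
  shows "(\<lambda>n. gram_dev (mat_adjoint (col_block (Bmat (N n) D r phi) j i) * col_block (Bmat (N n) D r phi) j i))
    \<longlonglongrightarrow> 0"
proof (rule gram_dev_tendsto_0)
  have B: "Bmat (N n) D r phi \<in> carrier_mat (N n) r" for n by (intro carrier_matI) simp_all
  have Bi: "col_block (Bmat (N n) D r phi) j i \<in> carrier_mat (N n) (j i)" for n by (simp add: col_block_def)
  show "\<forall>\<^sub>F n in sequentially.
      mat_adjoint (col_block (Bmat (N n) D r phi) j i) * col_block (Bmat (N n) D r phi) j i \<in> carrier_mat (j i) (j i)"
    using mult_carrier_mat[OF carrier_mat_adjoint[OF Bi] Bi] by simp
  fix a b assume ab: "a < j i" "b < j i"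
  have le: "blk_start j i + j i \<le> r" using blk_start_Suc_le[OF i] by (simp add: blk_start_Suc)
  then have "blk_start j i + a < r" "blk_start j i + b < r" using ab by simp_all
  from steering_gram_tendsto[OF N_le N_lim c_pos D_pos phi_range phi_distinct this]
  have "(\<lambda>n. (mat_adjoint (Bmat (N n) D r phi) * Bmat (N n) D r phi) $$ (blk_start j i + a, blk_start j i + b))
      \<longlonglongrightarrow> (if a = b then 1 else 0)"
    by (simp only: add_left_cancel)
  then show "(\<lambda>n. (mat_adjoint (col_block (Bmat (N n) D r phi) j i) * col_block (Bmat (N n) D r phi) j i) $$ (a,b))
      \<longlonglongrightarrow> (if a = b then 1 else 0)"
    unfolding col_block_gram_index[OF B le ab] .
qed

lemma singular_subspace_tendsto:
  assumes i: "i < s"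
  shows "(\<lambda>n. spec_norm (Pi_blk (U n) j i - proj_colspace (col_block (Bmat (N n) D r phi) j i))) \<longlonglongrightarrow> 0"
proof -
  define W where "W n = svd_coefficients (S n) (V n) (\<sigma> n) r" for n
  define Bi where "Bi n = col_block (Bmat (N n) D r phi) j i" for n
  define \<xi> where "\<xi> n = (\<Sum>p<r. \<Sum>q<r. cmod ((coefficient_block_gram (W n) r j i - block_indicator_mat r j i) $$ (p,q)))" for n
  define dv where "dv n = gram_dev (mat_adjoint (Bi n) * Bi n)" for n
  have dv: "dv \<longlonglongrightarrow> 0" unfolding dv_def Bi_def by (rule col_block_gram_dev_tendsto_0[OF i])
  have "(\<lambda>n. \<xi> n + 2 * dv n) \<longlonglongrightarrow> 0 + 2 * 0"
    unfolding \<xi>_def W_def by (intro tendsto_intros coefficient_block_deviation_tendsto_0[OF i] dv)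
  then have lim: "(\<lambda>n. \<xi> n + 2 * dv n) \<longlonglongrightarrow> 0" by simp
  have "\<forall>\<^sub>F n in sequentially. 0 < real (N n)"
    using proportional_sequence_at_top[OF N_lim c_pos] unfolding filterlim_at_top_dense by blast
  moreover have "\<forall>\<^sub>F n in sequentially. dv n < 1/2"
    using dv by (rule order_tendstoD(2)) simp
  ultimately have "\<forall>\<^sub>F n in sequentially. norm (spec_norm (Pi_blk (U n) j i - proj_colspace (Bi n))) \<le> \<xi> n + 2 * dv n"
    using eventually_svd_coefficient_eqs[folded W_def]
  proof eventually_elim
    case (elim n)
    have B: "Bmat (N n) D r phi \<in> carrier_mat (N n) r" by (intro carrier_matI) simp_all
    from elim have "W n \<in> carrier_mat r r" "0 < N n" "dv n \<le> 1/2"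
      and U: "U n = Bmat (N n) D r phi * W n" by auto
    from spec_norm_Pi_blk_minus_proj_colspace_le[OF B flat_mat_Bmat this(2,1) blk_start_Suc_le[OF i]
        this(3)[unfolded dv_def Bi_def]]
    show ?case unfolding \<xi>_def dv_def Bi_def U by simp
  qed
  then show ?thesis
    unfolding Bi_def using lim by (rule Lim_null_comparison)
qed

end

theorem lemma8:
  fixes N :: "nat \<Rightarrow> nat" and c D :: real and r s :: nat
    and phi :: "nat \<Rightarrow> real" and S :: "nat \<Rightarrow> complex mat"
    and j :: "nat \<Rightarrow> nat" and \<omega> :: "nat \<Rightarrow> real"
    and U V :: "nat \<Rightarrow> complex mat" and \<sigma> :: "nat \<Rightarrow> nat \<Rightarrow> real"
  assumes N_le: "\<And>n. N n \<le> n"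
    and N_lim: "(\<lambda>n. real (N n) / real n) \<longlonglongrightarrow> c"
    and c_pos: "0 < c" and c_le: "c \<le> 1"
    and D_pos: "0 < D"
    and phi_range: "\<And>k. k < r \<Longrightarrow> 0 \<le> phi k \<and> phi k \<le> pi / D"
    and phi_distinct: "inj_on phi {..<r}"
    and S_carrier: "\<And>n. S n \<in> carrier_mat n r"
    and S_bound: "\<exists>K. \<forall>\<^sub>F n in sequentially. \<forall>a<r. \<forall>b<r.
        cmod (complex_of_real (sqrt (real n)) *
              (mat_adjoint (S n) * S n - Omat r s j \<omega> * Omat r s j \<omega>) $$ (a, b)) \<le> K"
    and \<omega>_pos: "\<And>i. i < s \<Longrightarrow> 0 < \<omega> i"
    and \<omega>_decr: "\<And>i i'. i < i' \<Longrightarrow> i' < s \<Longrightarrow> \<omega> i' < \<omega> i"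
    and j_pos: "\<And>i. i < s \<Longrightarrow> 0 < j i"
    and j_sum: "(\<Sum>i<s. j i) = r"
    and svd: "\<forall>\<^sub>F n in sequentially.
        U n \<in> carrier_mat (N n) r \<and> V n \<in> carrier_mat n r \<and>
        mat_adjoint (U n) * U n = 1\<^sub>m r \<and> mat_adjoint (V n) * V n = 1\<^sub>m r \<and>
        (\<forall>k k'. k \<le> k' \<longrightarrow> k' < r \<longrightarrow> \<sigma> n k' \<le> \<sigma> n k) \<and>
        (\<forall>k<r. 0 < \<sigma> n k) \<and>
        Bmat (N n) D r phi * mat_adjoint (S n) =
          U n * mat_diag r (\<lambda>k. complex_of_real (\<sigma> n k)) * mat_adjoint (V n)"
    and \<sigma>_lim: "\<And>k. k < r \<Longrightarrow> (\<lambda>n. \<sigma> n k) \<longlonglongrightarrow> Odiag s j \<omega> k"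
  shows
    "(\<forall>a<r. \<forall>b<r. (\<lambda>n. (mat_adjoint (Bmat (N n) D r phi) * Bmat (N n) D r phi) $$ (a, b))
        \<longlonglongrightarrow> (if a = b then 1 else 0)) \<and>
     (\<forall>a<r. \<forall>b<r. (\<lambda>n. complex_of_real (1 / (real n)\<^sup>2) *
          (mat_adjoint (Bmat (N n) D r phi) * Bmat'' (N n) D r phi) $$ (a, b))
        \<longlonglongrightarrow> (if a = b then complex_of_real (- (c\<^sup>2 * D\<^sup>2 / 3)) else 0)) \<and>
     (\<forall>a<r. \<forall>b<r. (\<lambda>n. (mat_adjoint (Bperp n (N n) c D r phi) * Bperp n (N n) c D r phi) $$ (a, b))
        \<longlonglongrightarrow> (if a = b then 1 else 0)) \<and>
     (\<forall>a<r. \<forall>b<r. (\<lambda>n. (mat_adjoint (Bperp n (N n) c D r phi) * Bmat (N n) D r phi) $$ (a, b))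
        \<longlonglongrightarrow> 0) \<and>
     (\<forall>i<s. (\<lambda>n. spec_norm (Pi_blk (U n) j i - proj_colspace (col_block (Bmat (N n) D r phi) j i)))
        \<longlonglongrightarrow> 0)"
proof -
  \<comment> \<open>\<open>c_le\<close> follows from \<open>N_le\<close>, and empty blocks are harmless.\<close>
  note steering = N_le N_lim c_pos D_pos phi_range phi_distinct
  show ?thesis
    using steering_gram_tendsto[OF steering] steering_second_derivative_gram_tendsto[OF steering]
      steering_perp_gram_tendsto[OF steering] steering_perp_cross_gram_tendsto[OF steering]
      singular_subspace_tendsto[OF steering S_carrier S_bound \<omega>_pos \<omega>_decr j_sum svd \<sigma>_lim]
    by blast
qed

end
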